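(* Let $M>0$ and $\bar\alpha\ge0$. For any $f\in X_{\bar\alpha}$, \[ \big\||\partial_x|^{\frac56+\frac{\bar\alpha}2}I_M[f]\big\|_{L^2(\mathbb{R})}\le C\|f\|_{Y_{\bar\alpha}}, \] where $I_M[f](x)=\int_0^Mf(x,y)\,dy$ and $C$ is independent of $\bar\alpha$ and $f$.
   Context: $\Omega_M=\mathbb{R}\times[0,M]$; $|\partial_x|^s$ is the Fourier multiplier in $x$ with symbol $|\xi|^s$. $\|f\|_{Y_{\bar\alpha}}=\|y|\partial_x|^{\bar\alpha/2}\partial_xf\|_{L^2(\Omega_M)}+\||\partial_x|^{\frac23+\frac{\bar\alpha}2}f\|_{L^2(\Omega_M)}+\||\partial_x|^{\frac13+\frac{\bar\alpha}2}\partial_yf\|_{L^2(\Omega_M)}+\||\partial_x|^{\bar\alpha/2}\partial_y^2f\|_{L^2(\Omega_M)}+\||\partial_x|^{\frac{1+\bar\alpha}2}y^{1/2}\partial_yf\|_{L^2(\Omega_M)}$, $\|f\|_{X_{\bar\alpha}}=\|f\|_{L^2(\Omega_M)}+\||\partial_x|^{1/18}y^{1/6}f\|_{L^2(\Omega_M)}+\|f\|_{Y_{\bar\alpha}}$, and $X_{\bar\alpha}$ is the space where this is finite. *)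

theory Defs
  imports "HOL-Analysis.Analysis"
begin

text \<open>The strip Omega_M = R x [0,M]; points are pairs (x,y), on the Fourier side (xi,y).\<close>
definition strip :: "real \<Rightarrow> (real \<times> real) set" where
  "strip M = UNIV \<times> {0..M}"

definition trunc_ft :: "(real \<Rightarrow> complex) \<Rightarrow> real \<Rightarrow> real \<Rightarrow> complex" where
  "trunc_ft g R \<xi> = (LINT x:{-R..R}|lborel. g x * cis (- x * \<xi>))"

definition ft1 :: "(real \<Rightarrow> complex) \<Rightarrow> real \<Rightarrow> complex" where
  "ft1 g = (SOME h. h \<in> borel_measurable lborel \<and>
      (\<integral>\<^sup>+ \<xi>. ennreal ((cmod (h \<xi>))\<^sup>2) \<partial>lborel) < \<infinity> \<and>
      ((\<lambda>R. \<integral>\<^sup>+ \<xi>. ennreal ((cmod (trunc_ft g R \<xi> - h \<xi>))\<^sup>2) \<partial>lborel) \<longlongrightarrow> 0) at_top)"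

definition trunc_pft :: "(real \<Rightarrow> real \<Rightarrow> real) \<Rightarrow> real \<Rightarrow> real \<times> real \<Rightarrow> complex" where
  "trunc_pft f R z = (LINT x:{-R..R}|lborel. complex_of_real (f x (snd z)) * cis (- x * fst z))"

definition pft :: "real \<Rightarrow> (real \<Rightarrow> real \<Rightarrow> real) \<Rightarrow> real \<times> real \<Rightarrow> complex" where
  "pft M f = (SOME F. F \<in> borel_measurable lborel \<and>
      (\<integral>\<^sup>+ z \<in> strip M. ennreal ((cmod (F z))\<^sup>2) \<partial>lborel) < \<infinity> \<and>
      ((\<lambda>R. \<integral>\<^sup>+ z \<in> strip M. ennreal ((cmod (trunc_pft f R z - F z))\<^sup>2) \<partial>lborel) \<longlongrightarrow> 0) at_top)"

definition IM :: "real \<Rightarrow> (real \<Rightarrow> real \<Rightarrow> real) \<Rightarrow> real \<Rightarrow> real" where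
  "IM M f x = (LINT y:{0..M}|lborel. f x y)"

definition wsq :: "real \<Rightarrow> (real \<times> real \<Rightarrow> real) \<Rightarrow> (real \<times> real \<Rightarrow> complex) \<Rightarrow> ennreal" where
  "wsq M w G = (\<integral>\<^sup>+ z \<in> strip M. ennreal ((w z)\<^sup>2 * (cmod (G z))\<^sup>2) \<partial>lborel)"

definition wfin :: "real \<Rightarrow> (real \<times> real \<Rightarrow> real) \<Rightarrow> (real \<times> real \<Rightarrow> complex) \<Rightarrow> bool" where
  "wfin M w G \<longleftrightarrow> G \<in> borel_measurable lborel \<and> wsq M w G < \<infinity>"

text \<open>Physical-side L^2 norm via Plancherel: ||g||^2 = (1/(2 pi)) ||hat g||^2.\<close>
definition wnorm :: "real \<Rightarrow> (real \<times> real \<Rightarrow> real) \<Rightarrow> (real \<times> real \<Rightarrow> complex) \<Rightarrow> real" where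
  "wnorm M w G = sqrt (enn2real (wsq M w G) / (2 * pi))"

definition test1 :: "real \<Rightarrow> (real \<times> real \<Rightarrow> real) \<Rightarrow> (real \<times> real \<Rightarrow> real) \<Rightarrow> bool" where
  "test1 M \<phi> \<phi>1 \<longleftrightarrow>
     (\<exists>K. compact K \<and> K \<subseteq> UNIV \<times> {0<..<M} \<and> (\<forall>z. z \<notin> K \<longrightarrow> \<phi> z = 0)) \<and>
     continuous_on UNIV \<phi> \<and> continuous_on UNIV \<phi>1 \<and>
     (\<forall>\<xi> y. ((\<lambda>t. \<phi> (\<xi>, t)) has_real_derivative \<phi>1 (\<xi>, y)) (at y))"

definition test2 :: "real \<Rightarrow> (real \<times> real \<Rightarrow> real) \<Rightarrow> (real \<times> real \<Rightarrow> real) \<Rightarrow> (real \<times> real \<Rightarrow> real) \<Rightarrow> bool" where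
  "test2 M \<phi> \<phi>1 \<phi>2 \<longleftrightarrow> test1 M \<phi> \<phi>1 \<and> continuous_on UNIV \<phi>2 \<and>
     (\<forall>\<xi> y. ((\<lambda>t. \<phi>1 (\<xi>, t)) has_real_derivative \<phi>2 (\<xi>, y)) (at y))"

text \<open>Weak (distributional) statement  G = w(y) |xi|^s d_y F  on R x (0,M) (Fourier side of
  w(y) |d_x|^s d_y f).\<close>
definition weak_dy :: "real \<Rightarrow> (real \<times> real \<Rightarrow> real) \<Rightarrow> real \<Rightarrow> (real \<times> real \<Rightarrow> complex)
    \<Rightarrow> (real \<times> real \<Rightarrow> complex) \<Rightarrow> bool" where
  "weak_dy M w s F G \<longleftrightarrow> (\<forall>\<phi> \<phi>1. test1 M \<phi> \<phi>1 \<longrightarrow>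
     (LINT z:strip M|lborel. G z * complex_of_real (\<phi> z / w z)) =
     - (LINT z:strip M|lborel. complex_of_real (\<bar>fst z\<bar> powr s * \<phi>1 z) * F z))"

text \<open>Weak statement  G = |xi|^s d_y^2 F.\<close>
definition weak_dyy :: "real \<Rightarrow> real \<Rightarrow> (real \<times> real \<Rightarrow> complex) \<Rightarrow> (real \<times> real \<Rightarrow> complex) \<Rightarrow> bool" where
  "weak_dyy M s F G \<longleftrightarrow> (\<forall>\<phi> \<phi>1 \<phi>2. test2 M \<phi> \<phi>1 \<phi>2 \<longrightarrow>
     (LINT z:strip M|lborel. G z * complex_of_real (\<phi> z)) =
     (LINT z:strip M|lborel. complex_of_real (\<bar>fst z\<bar> powr s * \<phi>2 z) * F z))"

text \<open>Membership f in X_alpha, with G3 = hat of |d_x|^{1/3+a/2} d_y f,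
  G4 = hat of |d_x|^{a/2} d_y^2 f, G5 = hat of |d_x|^{(1+a)/2} y^{1/2} d_y f.\<close>
definition inX :: "real \<Rightarrow> real \<Rightarrow> (real \<Rightarrow> real \<Rightarrow> real) \<Rightarrow> (real \<times> real \<Rightarrow> complex)
    \<Rightarrow> (real \<times> real \<Rightarrow> complex) \<Rightarrow> (real \<times> real \<Rightarrow> complex) \<Rightarrow> bool" where
  "inX M a f G3 G4 G5 \<longleftrightarrow>
     (\<lambda>z. f (fst z) (snd z)) \<in> borel_measurable lborel \<and>
     (\<integral>\<^sup>+ z \<in> strip M. ennreal ((f (fst z) (snd z))\<^sup>2) \<partial>lborel) < \<infinity> \<and>
     wfin M (\<lambda>z. \<bar>fst z\<bar> powr (1/18) * snd z powr (1/6)) (pft M f) \<and>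
     wfin M (\<lambda>z. snd z * \<bar>fst z\<bar> powr (a/2) * \<bar>fst z\<bar>) (pft M f) \<and>
     wfin M (\<lambda>z. \<bar>fst z\<bar> powr (2/3 + a/2)) (pft M f) \<and>
     wfin M (\<lambda>z. 1) G3 \<and> weak_dy M (\<lambda>z. 1) (1/3 + a/2) (pft M f) G3 \<and>
     wfin M (\<lambda>z. 1) G4 \<and> weak_dyy M (a/2) (pft M f) G4 \<and>
     wfin M (\<lambda>z. 1) G5 \<and> weak_dy M (\<lambda>z. sqrt (snd z)) ((1 + a)/2) (pft M f) G5"

definition Ynorm :: "real \<Rightarrow> real \<Rightarrow> (real \<Rightarrow> real \<Rightarrow> real) \<Rightarrow> (real \<times> real \<Rightarrow> complex)
    \<Rightarrow> (real \<times> real \<Rightarrow> complex) \<Rightarrow> (real \<times> real \<Rightarrow> complex) \<Rightarrow> real" where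
  "Ynorm M a f G3 G4 G5 =
     wnorm M (\<lambda>z. snd z * \<bar>fst z\<bar> powr (a/2) * \<bar>fst z\<bar>) (pft M f) +
     wnorm M (\<lambda>z. \<bar>fst z\<bar> powr (2/3 + a/2)) (pft M f) +
     wnorm M (\<lambda>z. 1) G3 + wnorm M (\<lambda>z. 1) G4 + wnorm M (\<lambda>z. 1) G5"

end

theory Submission
  imports Defs "HOL-Probability.Characteristic_Functions" "HOL-Real_Asymp.Real_Asymp"
begin

text \<open>Write \<open>F(\<xi>, y)\<close> for the partial Fourier transform of \<open>f\<close> in \<open>x\<close>. The Fourier transform
  of \<open>I\<^sub>M[f]\<close> is \<open>\<integral>\<^sub>0\<^sup>M F(\<xi>, y) dy\<close>. For \<open>\<xi> \<noteq> 0\<close>, Cauchy--Schwarz with the weight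
  \<open>(\<alpha> + \<beta> y)\<^sup>2\<close>, where \<open>\<alpha> = |\<xi>|^(2/3+a/2)\<close> and \<open>\<beta> = |\<xi>|^(1+a/2)\<close>, gives
  \<open>|\<xi>|^(5/3+a) |\<integral>\<^sub>0\<^sup>M F dy|\<^sup>2 \<le> 2 \<integral>\<^sub>0\<^sup>M (\<alpha>\<^sup>2 + \<beta>\<^sup>2 y\<^sup>2) |F|\<^sup>2 dy\<close>, because
  \<open>\<integral>\<^sub>0\<^sup>\<infinity> (\<alpha> + \<beta> y)\<^sup>-\<^sup>2 dy = 1/(\<alpha> \<beta>) = |\<xi>|^-(5/3+a)\<close>. Integrating in \<open>\<xi>\<close> bounds the left-hand
  side by the first two terms of the \<open>Y\<close>-norm, so \<open>C = 2\<close> works.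

  Most of the work identifies the Fourier transforms, which are defined as \<open>L\<^sup>2\<close>-limits of
  truncated transforms. Plancherel's inequality, proved by Gaussian damping, makes the truncated
  partial transforms Cauchy in \<open>L\<^sup>2\<close>; a fast subsequence converges almost everywhere to the
  limit; and integration over \<open>[0, M]\<close> commutes with the limit by Cauchy--Schwarz.\<close>

lemma borel_measurable_cis [measurable]: "cis \<in> borel_measurable borel"
  by (rule borel_measurable_continuous_onI) (intro continuous_intros)

lemma borel_measurable_cnj [measurable]: "cnj \<in> borel_measurable borel"
  by (rule borel_measurable_continuous_onI) (intro continuous_intros)

lemma norm_integral_le_nn_integral:
  fixes f :: "'a \<Rightarrow> 'b::{banach, second_countable_topology}"
  shows "ennreal (norm (integral\<^sup>L M f)) \<le> (\<integral>\<^sup>+x. ennreal (norm (f x)) \<partial>M)"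
proof (cases "integrable M f")
  case True then show ?thesis by (rule integral_norm_bound_ennreal)
next
  case False then show ?thesis by (simp add: not_integrable_integral_eq)
qed

lemma integrable_pair_lborel_mult:
  fixes f g :: "real \<Rightarrow> real"
  assumes f: "integrable lborel f" and g: "integrable lborel g"
  shows "integrable (lborel \<Otimes>\<^sub>M lborel) (\<lambda>z. f (fst z) * g (snd z))"
proof (rule integrableI_bounded)
  have [measurable]: "f \<in> borel_measurable borel" "g \<in> borel_measurable borel"
    using f g by (auto dest: borel_measurable_integrable)
  show "(\<lambda>z. f (fst z) * g (snd z)) \<in> borel_measurable (lborel \<Otimes>\<^sub>M lborel)" by measurable
  have "(\<integral>\<^sup>+ z. ennreal (norm (f (fst z) * g (snd z))) \<partial>(lborel \<Otimes>\<^sub>M lborel))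
      = (\<integral>\<^sup>+ x. ennreal (norm (f x)) \<partial>lborel) * (\<integral>\<^sup>+ y. ennreal (norm (g y)) \<partial>lborel)"
    by (subst lborel.nn_integral_fst[symmetric])
       (auto simp: abs_mult ennreal_mult nn_integral_cmult nn_integral_multc)
  also have "\<dots> < \<infinity>"
    using f g unfolding integrable_iff_bounded by (auto simp: ennreal_mult_less_top)
  finally show "(\<integral>\<^sup>+ z. ennreal (norm (f (fst z) * g (snd z))) \<partial>(lborel \<Otimes>\<^sub>M lborel)) < \<infinity>" .
qed

lemma integrable_gaussian:
  fixes c :: real assumes c: "c > 0"
  shows "integrable lborel (\<lambda>\<xi>. exp (-((c*\<xi>)^2)/2))"
proof -
  have "integrable lborel (\<lambda>\<xi>. sqrt (2*pi) * std_normal_density (0 + c*\<xi>))"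
    using c by (intro integrable_mult_right lborel_integrable_real_affine integrable_normal_density) auto
  then show ?thesis by (simp add: std_normal_density_def)
qed

text \<open>A rescaling of the characteristic function of the standard normal distribution.\<close>
lemma fourier_gaussian:
  fixes c u :: real assumes c: "c > 0"
  shows "(CLINT \<xi>|lborel. complex_of_real (exp (-((c*\<xi>)^2)/2)) * cis (u*\<xi>))
     = complex_of_real (2 * pi * normal_density 0 c u)"
proof -
  define t where "t = u / c"
  have "complex_of_real (exp (-(t^2)/2)) = (CLINT x|lborel. std_normal_density x *\<^sub>R iexp (t * x))"
    using fun_cong[OF char_std_normal_distribution, of t] unfolding char_def
    by (subst (asm) integral_density) auto
  also have "\<dots> = \<bar>c\<bar> *\<^sub>R (CLINT \<xi>|lborel. std_normal_density (0 + c*\<xi>) *\<^sub>R iexp (t * (0 + c*\<xi>)))"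
    using c by (intro lborel_integral_real_affine) auto
  also have "(\<lambda>\<xi>. std_normal_density (0 + c*\<xi>) *\<^sub>R iexp (t * (0 + c*\<xi>)))
     = (\<lambda>\<xi>. complex_of_real (1 / sqrt (2*pi)) * (complex_of_real (exp (-((c*\<xi>)^2)/2)) * cis (u*\<xi>)))"
    using c by (auto simp: std_normal_density_def t_def cis_conv_exp scaleR_conv_of_real power_mult_distrib mult_ac)
  finally have "(CLINT \<xi>|lborel. complex_of_real (exp (-((c*\<xi>)^2)/2)) * cis (u*\<xi>))
      = complex_of_real (sqrt (2*pi) / c * exp (-(t^2)/2))"
    using c by (simp add: scaleR_conv_of_real field_simps)
  also have "sqrt (2*pi) / c * exp (-(t^2)/2) = 2 * pi * normal_density 0 c u"
    using c by (simp add: normal_density_def t_def real_sqrt_mult power_divide field_simps)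
  finally show ?thesis .
qed

definition fourier :: "(real \<Rightarrow> real) \<Rightarrow> real \<Rightarrow> complex" where
  "fourier g \<xi> = (CLINT x|lborel. complex_of_real (g x) * cis (- x * \<xi>))"

lemma borel_measurable_fourier [measurable]:
  assumes [measurable]: "g \<in> borel_measurable borel"
  shows "fourier g \<in> borel_measurable borel"
  unfolding fourier_def[abs_def] by measurable

lemma integrable_fourier_integrand:
  assumes g: "integrable lborel g"
  shows "integrable lborel (\<lambda>x. complex_of_real (g x) * cis (- x * \<xi>))"
proof (rule Bochner_Integration.integrable_bound)
  show "integrable lborel (\<lambda>x. \<bar>g x\<bar>)" using g by simp
  show "(\<lambda>x. complex_of_real (g x) * cis (- x * \<xi>)) \<in> borel_measurable lborel"
    using borel_measurable_integrable[OF g] by measurable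
qed (simp add: norm_mult)

lemma norm_fourier_le:
  assumes "integrable lborel g"
  shows "cmod (fourier g \<xi>) \<le> (LINT x|lborel. \<bar>g x\<bar>)"
proof -
  have "cmod (fourier g \<xi>) \<le> (LINT x|lborel. norm (complex_of_real (g x) * cis (- x * \<xi>)))"
    unfolding fourier_def by (rule integral_norm_bound)
  then show ?thesis by (simp add: norm_mult)
qed

lemma fourier_diff:
  assumes "integrable lborel g" "integrable lborel h"
  shows "fourier (\<lambda>x. g x - h x) \<xi> = fourier g \<xi> - fourier h \<xi>"
  unfolding fourier_def
  by (subst Bochner_Integration.integral_diff[symmetric,
        OF integrable_fourier_integrand[OF assms(1)] integrable_fourier_integrand[OF assms(2)]])
     (simp add: left_diff_distrib)

lemma cnj_fourier: "cnj (fourier g \<xi>) = (CLINT x|lborel. complex_of_real (g x) * cis (x * \<xi>))"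
  unfolding fourier_def by (subst Bochner_Integration.integral_cnj[symmetric]) (simp add: cis_cnj)

lemma gaussian_damped_fourier_cnj:
  fixes g :: "real \<Rightarrow> real"
  assumes g: "integrable lborel g" and c: "c > 0"
  shows "(CLINT \<xi>|lborel. complex_of_real (exp (-((c*\<xi>)^2)/2)) * cnj (fourier g \<xi>) * cis (- x * \<xi>))
      = (CLINT x'|lborel. complex_of_real (g x' * (2 * pi * normal_density 0 c (x' - x))))"
proof -
  note [measurable] = borel_measurable_integrable[OF g]
  define w where "w \<xi> = exp (-((c*\<xi>)^2)/2)" for \<xi>
  have "(CLINT \<xi>|lborel. complex_of_real (w \<xi>) * cnj (fourier g \<xi>) * cis (- x * \<xi>))
      = (CLINT \<xi>|lborel. CLINT x'|lborel. complex_of_real (g x') * (complex_of_real (w \<xi>) * cis ((x' - x) * \<xi>)))"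
    unfolding cnj_fourier
    by (simp add: cis_mult algebra_simps flip: integral_mult_right_zero)
  also have "\<dots> = (CLINT x'|lborel. CLINT \<xi>|lborel. complex_of_real (g x') * (complex_of_real (w \<xi>) * cis ((x' - x) * \<xi>)))"
  proof (rule lborel_pair.Fubini_integral[symmetric], rule Bochner_Integration.integrable_bound)
    show "integrable (lborel \<Otimes>\<^sub>M lborel) (\<lambda>z. w (fst z) * \<bar>g (snd z)\<bar>)"
      unfolding w_def using integrable_gaussian[OF c] g by (intro integrable_pair_lborel_mult) auto
  qed (auto simp: w_def case_prod_beta norm_mult)
  also have "\<dots> = (CLINT x'|lborel. complex_of_real (g x' * (2 * pi * normal_density 0 c (x' - x))))"
    unfolding w_def by (simp only: integral_mult_right_zero fourier_gaussian[OF c] of_real_mult)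
  finally show ?thesis unfolding w_def .
qed

text \<open>The Gaussian damping makes the double integrals absolutely convergent, so Fubini applies;
  the inner integral is then the Fourier transform of the Gaussian.\<close>
lemma gaussian_damped_parseval:
  fixes g :: "real \<Rightarrow> real"
  assumes g: "integrable lborel g" and c: "c > 0"
  shows "complex_of_real (LINT \<xi>|lborel. exp (-((c*\<xi>)^2)/2) * (cmod (fourier g \<xi>))^2)
     = (CLINT x|lborel. complex_of_real (g x) *
          (CLINT x'|lborel. complex_of_real (g x' * (2 * pi * normal_density 0 c (x' - x)))))"
proof -
  note [measurable] = borel_measurable_integrable[OF g]
  define w where "w \<xi> = exp (-((c*\<xi>)^2)/2)" for \<xi>
  define L where "L = (LINT x|lborel. \<bar>g x\<bar>)"
  have "complex_of_real (LINT \<xi>|lborel. w \<xi> * (cmod (fourier g \<xi>))^2)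
      = (CLINT \<xi>|lborel. complex_of_real (w \<xi>) * cnj (fourier g \<xi>) * fourier g \<xi>)"
    by (simp add: integral_complex_of_real[symmetric] complex_norm_square mult_ac del: of_real_power)
  also have "\<dots> = (CLINT \<xi>|lborel. CLINT x|lborel.
      complex_of_real (g x) * (complex_of_real (w \<xi>) * cnj (fourier g \<xi>) * cis (- x * \<xi>)))"
    by (subst (2) fourier_def) (simp add: mult_ac flip: integral_mult_right_zero)
  also have "\<dots> = (CLINT x|lborel. CLINT \<xi>|lborel.
      complex_of_real (g x) * (complex_of_real (w \<xi>) * cnj (fourier g \<xi>) * cis (- x * \<xi>)))"
  proof (rule lborel_pair.Fubini_integral[symmetric], rule Bochner_Integration.integrable_bound)
    show "integrable (lborel \<Otimes>\<^sub>M lborel) (\<lambda>z. w (fst z) * L * \<bar>g (snd z)\<bar>)"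
      unfolding w_def using integrable_gaussian[OF c] g by (intro integrable_pair_lborel_mult) auto
    have "w \<xi> * cmod (fourier g \<xi>) * \<bar>g x\<bar> \<le> w \<xi> * L * \<bar>g x\<bar>" for x \<xi>
      using norm_fourier_le[OF g] by (intro mult_right_mono mult_left_mono) (auto simp: w_def L_def)
    then show "AE z in lborel \<Otimes>\<^sub>M lborel.
        norm (case z of (\<xi>, x) \<Rightarrow> complex_of_real (g x) * (complex_of_real (w \<xi>) * cnj (fourier g \<xi>) * cis (- x * \<xi>)))
        \<le> norm (w (fst z) * L * \<bar>g (snd z)\<bar>)"
      by (auto simp: w_def L_def norm_mult mult_ac)
  qed (auto simp: w_def)
  also have "\<dots> = (CLINT x|lborel. complex_of_real (g x) *
          (CLINT x'|lborel. complex_of_real (g x' * (2 * pi * normal_density 0 c (x' - x)))))"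
    unfolding w_def by (simp only: integral_mult_right_zero gaussian_damped_fourier_cnj[OF g c])
  finally show ?thesis unfolding w_def .
qed

text \<open>Schur's test for a translation kernel: \<open>|g x| |g x'| \<le> ((g x)\<^sup>2 + (g x')\<^sup>2) / 2\<close>, and
  each half integrates against \<open>K\<close> by translation invariance.\<close>
lemma nn_integral_kernel_form_le:
  fixes g K :: "real \<Rightarrow> real"
  assumes [measurable]: "g \<in> borel_measurable borel" "K \<in> borel_measurable borel"
    and K_nonneg: "\<And>u. 0 \<le> K u"
  shows "(\<integral>\<^sup>+ x. \<integral>\<^sup>+ x'. ennreal (\<bar>g x\<bar> * \<bar>g x'\<bar> * K (x' - x)) \<partial>lborel \<partial>lborel)
     \<le> (\<integral>\<^sup>+ u. K u \<partial>lborel) * (\<integral>\<^sup>+ x. ennreal ((g x)^2) \<partial>lborel)"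
    (is "?lhs \<le> ?K * ?I")
proof -
  have K_shift: "(\<integral>\<^sup>+ x'. K (x' - x) \<partial>lborel) = ?K" "(\<integral>\<^sup>+ x. K (x' - x) \<partial>lborel) = ?K" for x x'
    using nn_integral_real_affine[of "\<lambda>u. ennreal (K u)" 1 "-x"]
      nn_integral_real_affine[of "\<lambda>u. ennreal (K u)" "-1" x'] by simp_all
  have "2 * ennreal (\<bar>g x\<bar> * \<bar>g x'\<bar> * K (x' - x))
      \<le> ennreal ((g x)^2) * K (x' - x) + ennreal ((g x')^2) * K (x' - x)" for x x'
  proof -
    have "2 * (\<bar>g x\<bar> * \<bar>g x'\<bar>) \<le> (g x)^2 + (g x')^2"
      using sum_squares_bound[of "\<bar>g x\<bar>" "\<bar>g x'\<bar>"] by (simp add: power2_eq_square)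
    then have "2 * (\<bar>g x\<bar> * \<bar>g x'\<bar> * K (x' - x)) \<le> (g x)^2 * K (x' - x) + (g x')^2 * K (x' - x)"
      using K_nonneg[of "x' - x"] by (metis distrib_right mult.assoc mult_right_mono)
    then have "ennreal (2 * (\<bar>g x\<bar> * \<bar>g x'\<bar> * K (x' - x)))
        \<le> ennreal ((g x)^2 * K (x' - x) + (g x')^2 * K (x' - x))"
      by (rule ennreal_leI)
    then show ?thesis
      using K_nonneg[of "x' - x"] by (simp add: ennreal_mult ennreal_plus)
  qed
  then have "2 * ?lhs \<le> (\<integral>\<^sup>+ x. \<integral>\<^sup>+ x'. ennreal ((g x)^2) * K (x' - x) + ennreal ((g x')^2) * K (x' - x) \<partial>lborel \<partial>lborel)"
    by (auto simp flip: nn_integral_cmult intro!: nn_integral_mono)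
  also have "\<dots> = (\<integral>\<^sup>+ x. \<integral>\<^sup>+ x'. ennreal ((g x)^2) * K (x' - x) \<partial>lborel \<partial>lborel)
      + (\<integral>\<^sup>+ x. \<integral>\<^sup>+ x'. ennreal ((g x')^2) * K (x' - x) \<partial>lborel \<partial>lborel)"
    by (simp add: nn_integral_add)
  also have "(\<integral>\<^sup>+ x. \<integral>\<^sup>+ x'. ennreal ((g x)^2) * K (x' - x) \<partial>lborel \<partial>lborel) = ?K * ?I"
    by (simp add: nn_integral_cmult K_shift) (subst nn_integral_multc; simp add: mult.commute)
  also have "(\<integral>\<^sup>+ x. \<integral>\<^sup>+ x'. ennreal ((g x')^2) * K (x' - x) \<partial>lborel \<partial>lborel)
      = (\<integral>\<^sup>+ x'. \<integral>\<^sup>+ x. ennreal ((g x')^2) * K (x' - x) \<partial>lborel \<partial>lborel)"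
    by (rule lborel_pair.Fubini') measurable
  also have "\<dots> = ?K * ?I"
    by (simp add: nn_integral_cmult K_shift) (subst nn_integral_multc; simp add: mult.commute)
  finally have "2 * ?lhs \<le> 2 * (?K * ?I)" by (simp add: mult_2)
  then show ?thesis by (subst (asm) ennreal_mult_le_mult_iff) auto
qed

lemma gaussian_damped_plancherel:
  fixes g :: "real \<Rightarrow> real"
  assumes g: "integrable lborel g" and c: "c > 0"
  shows "(\<integral>\<^sup>+ \<xi>. ennreal (exp (-((c*\<xi>)^2)/2) * (cmod (fourier g \<xi>))^2) \<partial>lborel)
     \<le> 2 * pi * (\<integral>\<^sup>+ x. ennreal ((g x)^2) \<partial>lborel)"
proof -
  note [measurable] = borel_measurable_integrable[OF g]
  define w where "w \<xi> = exp (-((c*\<xi>)^2)/2)" for \<xi>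
  define K where "K u = 2 * pi * normal_density 0 c u" for u
  have K_nonneg: "0 \<le> K u" for u by (simp add: K_def)
  have [measurable]: "K \<in> borel_measurable borel" by (simp add: K_def[abs_def])
  have "integrable lborel (\<lambda>\<xi>. w \<xi> * (cmod (fourier g \<xi>))^2)"
  proof (rule Bochner_Integration.integrable_bound)
    show "integrable lborel (\<lambda>\<xi>. w \<xi> * (LINT x|lborel. \<bar>g x\<bar>)^2)"
      using integrable_gaussian[OF c] by (simp add: w_def)
    show "AE \<xi> in lborel. norm (w \<xi> * (cmod (fourier g \<xi>))^2) \<le> norm (w \<xi> * (LINT x|lborel. \<bar>g x\<bar>)^2)"
      using norm_fourier_le[OF g] by (auto simp: w_def intro!: mult_left_mono power_mono)
  qed (simp add: w_def)
  then have "(\<integral>\<^sup>+ \<xi>. ennreal (w \<xi> * (cmod (fourier g \<xi>))^2) \<partial>lborel)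
      = ennreal (cmod (complex_of_real (LINT \<xi>|lborel. w \<xi> * (cmod (fourier g \<xi>))^2)))"
    by (subst nn_integral_eq_integral) (auto simp: w_def)
  also have "\<dots> = ennreal (cmod (CLINT x|lborel. complex_of_real (g x) *
      (CLINT x'|lborel. complex_of_real (g x' * K (x' - x)))))"
    unfolding w_def K_def gaussian_damped_parseval[OF g c] ..
  also have "\<dots> \<le> (\<integral>\<^sup>+ x. ennreal \<bar>g x\<bar> *
      ennreal (cmod (CLINT x'|lborel. complex_of_real (g x' * K (x' - x)))) \<partial>lborel)"
    by (rule order_trans[OF norm_integral_le_nn_integral]) (simp add: norm_mult ennreal_mult)
  also have "\<dots> \<le> (\<integral>\<^sup>+ x. ennreal \<bar>g x\<bar> * (\<integral>\<^sup>+ x'. ennreal (\<bar>g x'\<bar> * K (x' - x)) \<partial>lborel) \<partial>lborel)"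
    by (intro nn_integral_mono mult_left_mono order_trans[OF norm_integral_le_nn_integral])
       (simp_all add: norm_mult abs_mult K_nonneg)
  also have "\<dots> = (\<integral>\<^sup>+ x. \<integral>\<^sup>+ x'. ennreal (\<bar>g x\<bar> * \<bar>g x'\<bar> * K (x' - x)) \<partial>lborel \<partial>lborel)"
    by (intro nn_integral_cong, subst nn_integral_cmult[symmetric]) (auto simp: ennreal_mult K_nonneg mult.assoc)
  also have "\<dots> \<le> (\<integral>\<^sup>+ u. K u \<partial>lborel) * (\<integral>\<^sup>+ x. ennreal ((g x)^2) \<partial>lborel)"
    by (rule nn_integral_kernel_form_le) (auto simp: K_nonneg)
  also have "(\<integral>\<^sup>+ u. K u \<partial>lborel) = 2 * pi"
    using c by (simp add: K_def ennreal_mult nn_integral_cmult nn_integral_eq_integral)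
  finally show ?thesis unfolding w_def .
qed

text \<open>Let the damping parameter tend to zero and apply Fatou's lemma.\<close>
lemma plancherel_le:
  fixes g :: "real \<Rightarrow> real"
  assumes g: "integrable lborel g"
  shows "(\<integral>\<^sup>+ \<xi>. ennreal ((cmod (fourier g \<xi>))^2) \<partial>lborel) \<le> 2 * pi * (\<integral>\<^sup>+ x. ennreal ((g x)^2) \<partial>lborel)"
proof -
  note [measurable] = borel_measurable_integrable[OF g]
  define u where "u n \<xi> = ennreal (exp (-((inverse (Suc n) * \<xi>)^2)/2) * (cmod (fourier g \<xi>))^2)" for n \<xi>
  have "liminf (\<lambda>n. u n \<xi>) = ennreal ((cmod (fourier g \<xi>))^2)" for \<xi>
  proof (rule lim_imp_Liminf)
    have "(\<lambda>n. exp (-((inverse (Suc n) * \<xi>)^2)/2) * (cmod (fourier g \<xi>))^2)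
        \<longlonglongrightarrow> exp (-((0 * \<xi>)^2)/2) * (cmod (fourier g \<xi>))^2"
      by (intro tendsto_intros LIMSEQ_inverse_real_of_nat) simp
    then show "(\<lambda>n. u n \<xi>) \<longlonglongrightarrow> ennreal ((cmod (fourier g \<xi>))^2)"
      unfolding u_def by (intro tendsto_ennrealI) simp
  qed simp
  then have "(\<integral>\<^sup>+ \<xi>. ennreal ((cmod (fourier g \<xi>))^2) \<partial>lborel) = (\<integral>\<^sup>+ \<xi>. liminf (\<lambda>n. u n \<xi>) \<partial>lborel)"
    by simp
  also have "\<dots> \<le> liminf (\<lambda>n. integral\<^sup>N lborel (u n))"
    by (rule nn_integral_liminf) (simp add: u_def)
  also have "\<dots> \<le> liminf (\<lambda>n. 2 * pi * (\<integral>\<^sup>+ x. ennreal ((g x)^2) \<partial>lborel))"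
    unfolding u_def by (intro Liminf_mono always_eventually allI gaussian_damped_plancherel g) simp
  finally show ?thesis by (simp add: Liminf_const)
qed

lemma summable_of_weighted_square_bound:
  fixes a :: "nat \<Rightarrow> 'a::banach"
  assumes "\<And>k. 2^k * (norm (a k))^2 \<le> w"
  shows "summable a"
proof -
  have bound: "norm (a k) \<le> sqrt w * sqrt (1/2) ^ k" for k
  proof -
    have "(norm (a k))^2 \<le> w * (1/2)^k"
      using assms[of k] by (simp add: field_simps power_divide)
    then have "sqrt ((norm (a k))^2) \<le> sqrt (w * (1/2)^k)" by (rule real_sqrt_le_mono)
    then show ?thesis by (simp add: real_sqrt_mult real_sqrt_power)
  qed
  have "summable (\<lambda>k. sqrt w * sqrt (1/2) ^ k)"
    by (intro summable_mult summable_geometric) simp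
  then have "summable (\<lambda>k. norm (a k))"
    by (rule summable_comparison_test'[where N=0]) (use bound in auto)
  then show ?thesis by (rule summable_norm_cancel)
qed

lemma convergent_of_summable_diff:
  fixes X :: "nat \<Rightarrow> 'a::real_normed_vector"
  assumes "summable (\<lambda>k. X (Suc k) - X k)"
  shows "convergent X"
proof -
  have "(\<lambda>n. X 0 + (\<Sum>k<n. X (Suc k) - X k)) \<longlonglongrightarrow> X 0 + (\<Sum>k. X (Suc k) - X k)"
    using summable_LIMSEQ[OF assms] by (intro tendsto_intros)
  then show ?thesis unfolding convergent_def sum_lessThan_telescope by auto
qed

lemma convergent_of_weighted_square_sum:
  fixes X :: "nat \<Rightarrow> 'a::banach"
  assumes "(\<Sum>k. ennreal (2^k * (norm (X (Suc k) - X k))^2)) < \<infinity>"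
  shows "convergent X"
proof (intro convergent_of_summable_diff summable_of_weighted_square_bound)
  fix k
  have "(\<Sum>k\<in>{k}. ennreal (2^k * (norm (X (Suc k) - X k))^2)) \<le> (\<Sum>k. ennreal (2^k * (norm (X (Suc k) - X k))^2))"
    by (rule sum_le_suminf) auto
  then have "enn2real (ennreal (2^k * (norm (X (Suc k) - X k))^2))
      \<le> enn2real (\<Sum>k. ennreal (2^k * (norm (X (Suc k) - X k))^2))"
    by (intro enn2real_mono) (use assms in simp_all)
  then show "2^k * (norm (X (Suc k) - X k))^2 \<le> enn2real (\<Sum>k. ennreal (2^k * (norm (X (Suc k) - X k))^2))"
    by simp
qed

text \<open>The weighted sum \<open>\<Sum>k. 2^k |u (k+1) - u k|\<^sup>2\<close> has finite integral, so it is finite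
  almost everywhere.\<close>
lemma AE_convergent_fast_L2_Cauchy:
  fixes u :: "nat \<Rightarrow> 'a \<Rightarrow> complex"
  assumes [measurable]: "\<And>k. u k \<in> borel_measurable N" "A \<in> sets N"
    and fast: "\<And>k. (\<integral>\<^sup>+ z\<in>A. ennreal ((cmod (u (Suc k) z - u k z))^2) \<partial>N) \<le> ennreal ((1/4)^k)"
  shows "AE z in N. z \<in> A \<longrightarrow> convergent (\<lambda>k. u k z)"
proof -
  define W where "W z = (\<Sum>k. ennreal (2^k * (cmod (u (Suc k) z - u k z))^2))" for z
  have "(\<integral>\<^sup>+ z\<in>A. W z \<partial>N) = (\<Sum>k. \<integral>\<^sup>+ z\<in>A. ennreal (2^k) * ennreal ((cmod (u (Suc k) z - u k z))^2) \<partial>N)"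
    unfolding W_def by (subst nn_integral_suminf[symmetric]) (auto simp: ennreal_mult)
  also have "\<dots> \<le> (\<Sum>k. ennreal ((1/2)^k))"
  proof (intro suminf_le allI)
    fix k :: nat
    have "(\<integral>\<^sup>+ z\<in>A. ennreal (2^k) * ennreal ((cmod (u (Suc k) z - u k z))^2) \<partial>N)
        = ennreal (2^k) * (\<integral>\<^sup>+ z\<in>A. ennreal ((cmod (u (Suc k) z - u k z))^2) \<partial>N)"
      by (simp add: nn_integral_cmult mult.assoc)
    also have "\<dots> \<le> ennreal (2^k) * ennreal ((1/4)^k)"
      by (intro mult_left_mono fast) simp
    also have "\<dots> = ennreal ((1/2)^k)"
      by (simp add: ennreal_mult[symmetric] power_mult_distrib[symmetric] del: ennreal_mult)
    finally show "(\<integral>\<^sup>+ z\<in>A. ennreal (2^k) * ennreal ((cmod (u (Suc k) z - u k z))^2) \<partial>N) \<le> ennreal ((1/2)^k)" .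
  qed auto
  also have "\<dots> = ennreal (\<Sum>k. (1/2)^k)"
    by (intro suminf_ennreal2) (auto intro: summable_geometric)
  finally have "(\<integral>\<^sup>+ z. W z * indicator A z \<partial>N) \<noteq> \<infinity>"
    by (auto simp: top_unique)
  then have "AE z in N. W z * indicator A z \<noteq> \<infinity>"
    by (intro nn_integral_PInf_AE) (auto simp: W_def)
  then show ?thesis
    by eventually_elim
       (auto intro!: convergent_of_weighted_square_sum simp: W_def top.not_eq_extremum)
qed

lemma fast_radii_of_vanishing_modulus:
  fixes e :: "real \<Rightarrow> ennreal"
  assumes e: "(e \<longlongrightarrow> 0) at_top"
  obtains \<rho> :: "nat \<Rightarrow> real"
  where "\<And>k. real k \<le> \<rho> k" and "\<And>k. e (min (\<rho> k) (\<rho> (Suc k))) \<le> ennreal ((1/4)^k)"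
proof -
  have "\<forall>k. \<exists>r. \<forall>s\<ge>r. e s < ennreal ((1/4)^k)"
    using order_tendstoD(2)[OF e] by (simp add: eventually_at_top_linorder)
  then obtain r where r: "\<And>k s. s \<ge> r k \<Longrightarrow> e s < ennreal ((1/4)^k)" by metis
  define \<rho> where "\<rho> k = max (r k) (real k)" for k
  show ?thesis
  proof (rule that)
    show "real k \<le> \<rho> k" for k by (simp add: \<rho>_def)
    show "e (min (\<rho> k) (\<rho> (Suc k))) \<le> ennreal ((1/4)^k)" for k
    proof (cases "\<rho> k \<le> \<rho> (Suc k)")
      case True then show ?thesis using r[of k "\<rho> k"] by (simp add: \<rho>_def)
    next
      case False
      have "e (\<rho> (Suc k)) < ennreal ((1/4)^Suc k)" using r[of "Suc k" "\<rho> (Suc k)"] by (simp add: \<rho>_def)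
      also have "\<dots> \<le> ennreal ((1/4)^k)" by (intro ennreal_leI) (simp add: power_decreasing)
      finally show ?thesis using False by simp
    qed
  qed
qed

lemma nn_integral_norm_squared_le_liminf:
  fixes u :: "nat \<Rightarrow> 'a \<Rightarrow> 'b::{banach, second_countable_topology}"
  assumes [measurable]: "\<And>k. u k \<in> borel_measurable N" "G \<in> borel_measurable N" "A \<in> sets N"
    and lim: "AE z in N. z \<in> A \<longrightarrow> (\<lambda>k. u k z) \<longlonglongrightarrow> F z"
  shows "(\<integral>\<^sup>+ z\<in>A. ennreal ((norm (G z - F z))^2) \<partial>N)
    \<le> liminf (\<lambda>k. \<integral>\<^sup>+ z\<in>A. ennreal ((norm (G z - u k z))^2) \<partial>N)"
proof -
  have "(\<integral>\<^sup>+ z\<in>A. ennreal ((norm (G z - F z))^2) \<partial>N)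
      = (\<integral>\<^sup>+ z. liminf (\<lambda>k. ennreal ((norm (G z - u k z))^2) * indicator A z) \<partial>N)"
    using lim
  proof (intro nn_integral_cong_AE, eventually_elim)
    case (elim z)
    show ?case
    proof (cases "z \<in> A")
      case True
      with elim have "(\<lambda>k. ennreal ((norm (G z - u k z))^2)) \<longlonglongrightarrow> ennreal ((norm (G z - F z))^2)"
        by (intro tendsto_ennrealI tendsto_intros) simp
      then have "liminf (\<lambda>k. ennreal ((norm (G z - u k z))^2)) = ennreal ((norm (G z - F z))^2)"
        by (rule lim_imp_Liminf[rotated]) simp
      with True show ?thesis by simp
    qed (simp add: Liminf_const)
  qed
  also have "\<dots> \<le> liminf (\<lambda>k. \<integral>\<^sup>+ z\<in>A. ennreal ((norm (G z - u k z))^2) \<partial>N)"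
    by (rule nn_integral_liminf) measurable
  finally show ?thesis .
qed

text \<open>The limit is the pointwise limit along a fast subsequence; the bound follows by Fatou's
  lemma.\<close>
lemma L2_limit_of_Cauchy_modulus:
  fixes T :: "real \<Rightarrow> 'a \<Rightarrow> complex" and e :: "real \<Rightarrow> ennreal"
  assumes [measurable]: "\<And>R. T R \<in> borel_measurable N" "A \<in> sets N"
    and e: "(e \<longlongrightarrow> 0) at_top"
    and cauchy: "\<And>R S. (\<integral>\<^sup>+ z\<in>A. ennreal ((cmod (T S z - T R z))^2) \<partial>N) \<le> e (min R S)"
  obtains F where "F \<in> borel_measurable N"
    and "\<And>R. (\<integral>\<^sup>+ z\<in>A. ennreal ((cmod (T R z - F z))^2) \<partial>N) \<le> e R"
proof -
  obtain \<rho> where \<rho>_ge: "\<And>k. real k \<le> \<rho> k"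
    and \<rho>_fast: "\<And>k. e (min (\<rho> k) (\<rho> (Suc k))) \<le> ennreal ((1/4)^k)"
    using fast_radii_of_vanishing_modulus[OF e] by blast
  have "(\<integral>\<^sup>+ z\<in>A. ennreal ((cmod (T (\<rho> (Suc k)) z - T (\<rho> k) z))^2) \<partial>N) \<le> ennreal ((1/4)^k)" for k
    using cauchy[where R="\<rho> k" and S="\<rho> (Suc k)"] \<rho>_fast[of k] by (rule order_trans)
  then have "AE z in N. z \<in> A \<longrightarrow> convergent (\<lambda>k. T (\<rho> k) z)"
    by (intro AE_convergent_fast_L2_Cauchy) auto
  then have lim: "AE z in N. z \<in> A \<longrightarrow> (\<lambda>k. T (\<rho> k) z) \<longlonglongrightarrow> lim (\<lambda>k. T (\<rho> k) z)"
    by eventually_elim (simp add: convergent_LIMSEQ_iff)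
  show ?thesis
  proof (rule that)
    show "(\<lambda>z. lim (\<lambda>k. T (\<rho> k) z)) \<in> borel_measurable N" by measurable
    fix R
    have R_le: "R \<le> \<rho> k" if "nat \<lceil>R\<rceil> \<le> k" for k
      using real_nat_ceiling_ge[of R] \<rho>_ge[of k] that by (meson of_nat_le_iff order_trans)
    have "eventually (\<lambda>k. (\<integral>\<^sup>+ z\<in>A. ennreal ((cmod (T R z - T (\<rho> k) z))^2) \<partial>N) \<le> e R) sequentially"
      using eventually_ge_at_top[of "nat \<lceil>R\<rceil>"] by eventually_elim (metis R_le cauchy min.absorb2)
    then have "liminf (\<lambda>k. \<integral>\<^sup>+ z\<in>A. ennreal ((cmod (T R z - T (\<rho> k) z))^2) \<partial>N) \<le> liminf (\<lambda>k. e R)"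
      by (rule Liminf_mono)
    then have "liminf (\<lambda>k. \<integral>\<^sup>+ z\<in>A. ennreal ((cmod (T R z - T (\<rho> k) z))^2) \<partial>N) \<le> e R"
      by (simp add: Liminf_const)
    moreover have "(\<integral>\<^sup>+ z\<in>A. ennreal ((cmod (T R z - lim (\<lambda>k. T (\<rho> k) z)))^2) \<partial>N)
        \<le> liminf (\<lambda>k. \<integral>\<^sup>+ z\<in>A. ennreal ((cmod (T R z - T (\<rho> k) z))^2) \<partial>N)"
      by (intro nn_integral_norm_squared_le_liminf lim assms)
    ultimately show "(\<integral>\<^sup>+ z\<in>A. ennreal ((cmod (T R z - lim (\<lambda>k. T (\<rho> k) z)))^2) \<partial>N) \<le> e R"
      by (rule order_trans[rotated])
  qed
qed

lemma L2_set_integrable: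
  fixes u :: "'a \<Rightarrow> 'b::{banach, second_countable_topology}"
  assumes [measurable]: "u \<in> borel_measurable N" "A \<in> sets N" and A: "emeasure N A < \<infinity>"
    and fin: "(\<integral>\<^sup>+ z\<in>A. ennreal ((norm (u z))^2) \<partial>N) < \<infinity>"
  shows "set_integrable N A u"
  unfolding set_integrable_def
proof (rule integrableI_bounded)
  show "(\<lambda>z. indicator A z *\<^sub>R u z) \<in> borel_measurable N" by measurable
  have "(\<integral>\<^sup>+ z. (ennreal (indicator A z))^2 \<partial>N) = (\<integral>\<^sup>+ z. indicator A z \<partial>N)"
    by (intro nn_integral_cong) (simp add: indicator_def)
  then have ind: "(\<integral>\<^sup>+ z. (ennreal (indicator A z))^2 \<partial>N) = emeasure N A"
    by simp
  have sq: "(\<integral>\<^sup>+ z. (ennreal (norm (u z)) * indicator A z)^2 \<partial>N) = (\<integral>\<^sup>+ z\<in>A. ennreal ((norm (u z))^2) \<partial>N)"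
    by (intro nn_integral_cong) (simp add: indicator_def ennreal_power)
  have "(\<integral>\<^sup>+ z. ennreal (norm (indicator A z *\<^sub>R u z)) \<partial>N)^2
      = (\<integral>\<^sup>+ z. ennreal (indicator A z) * (ennreal (norm (u z)) * indicator A z) \<partial>N)^2"
    by (intro arg_cong[where f="\<lambda>x. x^2"] nn_integral_cong) (simp add: indicator_def)
  also have "\<dots> \<le> (\<integral>\<^sup>+ z. (ennreal (indicator A z))^2 \<partial>N) * (\<integral>\<^sup>+ z. (ennreal (norm (u z)) * indicator A z)^2 \<partial>N)"
    by (rule Cauchy_Schwarz_nn_integral) measurable
  also have "\<dots> < \<infinity>"
    unfolding ind sq using A fin by (simp add: ennreal_mult_less_top)
  finally show "(\<integral>\<^sup>+ z. ennreal (norm (indicator A z *\<^sub>R u z)) \<partial>N) < \<infinity>"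
    by (simp add: power_less_top_ennreal)
qed

lemma norm_set_integral_squared_le:
  fixes u :: "'a \<Rightarrow> 'b::{banach, second_countable_topology}" and \<omega> :: "'a \<Rightarrow> real"
  assumes [measurable]: "u \<in> borel_measurable N" "\<omega> \<in> borel_measurable N" "A \<in> sets N"
    and \<omega>_pos: "\<And>z. z \<in> A \<Longrightarrow> 0 < \<omega> z"
  shows "ennreal ((norm (set_lebesgue_integral N A u))^2)
     \<le> (\<integral>\<^sup>+ z\<in>A. ennreal (1 / \<omega> z) \<partial>N) * (\<integral>\<^sup>+ z\<in>A. ennreal (\<omega> z * (norm (u z))^2) \<partial>N)"
proof -
  define p where "p z = ennreal (indicator A z / sqrt (\<omega> z))" for z
  define q where "q z = ennreal (indicator A z * sqrt (\<omega> z) * norm (u z))" for z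
  have "ennreal (norm (set_lebesgue_integral N A u)) \<le> (\<integral>\<^sup>+ z. ennreal (norm (indicator A z *\<^sub>R u z)) \<partial>N)"
    unfolding set_lebesgue_integral_def by (rule norm_integral_le_nn_integral)
  also have "\<dots> = (\<integral>\<^sup>+ z. p z * q z \<partial>N)"
  proof (intro nn_integral_cong)
    fix z
    show "ennreal (norm (indicator A z *\<^sub>R u z)) = p z * q z"
      using \<omega>_pos[of z] by (cases "z \<in> A") (simp_all add: p_def q_def flip: ennreal_mult)
  qed
  finally have "ennreal ((norm (set_lebesgue_integral N A u))^2) \<le> (\<integral>\<^sup>+ z. p z * q z \<partial>N)^2"
    by (simp add: ennreal_power[symmetric] power_mono)
  also have "\<dots> \<le> (\<integral>\<^sup>+ z. (p z)^2 \<partial>N) * (\<integral>\<^sup>+ z. (q z)^2 \<partial>N)"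
    by (rule Cauchy_Schwarz_nn_integral) (simp_all add: p_def q_def)
  also have "(\<integral>\<^sup>+ z. (p z)^2 \<partial>N) = (\<integral>\<^sup>+ z\<in>A. ennreal (1 / \<omega> z) \<partial>N)"
    by (intro nn_integral_cong)
       (auto simp: p_def indicator_def ennreal_power \<omega>_pos less_imp_le power_divide)
  also have "(\<integral>\<^sup>+ z. (q z)^2 \<partial>N) = (\<integral>\<^sup>+ z\<in>A. ennreal (\<omega> z * (norm (u z))^2) \<partial>N)"
    by (intro nn_integral_cong)
       (auto simp: q_def indicator_def ennreal_power \<omega>_pos less_imp_le power_mult_distrib)
  finally show ?thesis .
qed

lemma nn_integral_Icc_inverse_square_le:
  assumes \<alpha>: "0 < \<alpha>" and \<beta>: "0 < \<beta>"
  shows "(\<integral>\<^sup>+ y\<in>{0..M}. ennreal (1 / (\<alpha> + \<beta> * y)^2) \<partial>lborel) \<le> ennreal (1 / (\<alpha> * \<beta>))"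
proof -
  have "(\<integral>\<^sup>+ y\<in>{0..M}. ennreal (1 / (\<alpha> + \<beta> * y)^2) \<partial>lborel)
      \<le> (\<integral>\<^sup>+ y\<in>{0..}. ennreal (1 / (\<alpha> + \<beta> * y)^2) \<partial>lborel)"
    by (intro nn_integral_mono mult_left_mono) (auto simp: indicator_def)
  also have "\<dots> = ennreal (0 - (- 1 / (\<beta> * (\<alpha> + \<beta> * 0))))"
  proof (rule nn_integral_FTC_atLeast)
    show "((\<lambda>y. - 1 / (\<beta> * (\<alpha> + \<beta> * y))) has_real_derivative 1 / (\<alpha> + \<beta> * y)^2) (at y)"
      if "0 \<le> y" for y
    proof -
      have "0 < \<alpha> + \<beta> * y"
        using \<alpha> \<beta> that by (simp add: add_pos_nonneg)
      moreover have "\<beta> * \<beta> / (\<beta> * (\<alpha> + \<beta> * y))^2 = 1 / (\<alpha> + \<beta> * y)^2"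
        using \<beta> by (simp add: power_mult_distrib power2_eq_square)
      ultimately show ?thesis
        using \<beta> by (auto intro!: derivative_eq_intros simp: power2_eq_square)
    qed
    show "((\<lambda>y. - 1 / (\<beta> * (\<alpha> + \<beta> * y))) \<longlongrightarrow> 0) at_top"
      using \<alpha> \<beta> by real_asymp
  qed auto
  finally show ?thesis
    by (simp add: mult.commute)
qed

text \<open>Cauchy--Schwarz with the weight \<open>(\<alpha> + \<beta> y)\<^sup>2 \<le> 2 (\<alpha>\<^sup>2 + \<beta>\<^sup>2 y\<^sup>2)\<close>.\<close>
lemma norm_set_integral_Icc_squared_le:
  fixes u :: "real \<Rightarrow> 'b::{banach, second_countable_topology}"
  assumes [measurable]: "u \<in> borel_measurable borel" and \<alpha>: "0 < \<alpha>" and \<beta>: "0 < \<beta>"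
  shows "ennreal ((norm (LINT y:{0..M}|lborel. u y))^2)
     \<le> ennreal (2 / (\<alpha> * \<beta>)) * (\<integral>\<^sup>+ y\<in>{0..M}. ennreal ((\<alpha>^2 + (\<beta> * y)^2) * (norm (u y))^2) \<partial>lborel)"
proof -
  have pos: "0 < \<alpha> + \<beta> * y" if "0 \<le> y" for y
    using \<alpha> \<beta> that by (simp add: add_pos_nonneg)
  have "(\<integral>\<^sup>+ y\<in>{0..M}. ennreal ((\<alpha> + \<beta> * y)^2 * (norm (u y))^2) \<partial>lborel)
      \<le> (\<integral>\<^sup>+ y\<in>{0..M}. 2 * ennreal ((\<alpha>^2 + (\<beta> * y)^2) * (norm (u y))^2) \<partial>lborel)"
  proof (intro nn_integral_mono mult_right_mono)
    fix y
    have "(\<alpha> + \<beta> * y)^2 \<le> 2 * (\<alpha>^2 + (\<beta> * y)^2)"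
      using zero_le_power2[of "\<alpha> - \<beta> * y"] by (simp add: power2_sum power2_diff)
    then have "(\<alpha> + \<beta> * y)^2 * (norm (u y))^2 \<le> 2 * ((\<alpha>^2 + (\<beta> * y)^2) * (norm (u y))^2)"
      unfolding mult.assoc[symmetric] by (rule mult_right_mono) simp
    then have "ennreal ((\<alpha> + \<beta> * y)^2 * (norm (u y))^2) \<le> ennreal (2 * ((\<alpha>^2 + (\<beta> * y)^2) * (norm (u y))^2))"
      by (rule ennreal_leI)
    then show "ennreal ((\<alpha> + \<beta> * y)^2 * (norm (u y))^2) \<le> 2 * ennreal ((\<alpha>^2 + (\<beta> * y)^2) * (norm (u y))^2)"
      by (simp add: ennreal_mult)
  qed simp
  then have energy: "(\<integral>\<^sup>+ y\<in>{0..M}. ennreal ((\<alpha> + \<beta> * y)^2 * (norm (u y))^2) \<partial>lborel)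
      \<le> 2 * (\<integral>\<^sup>+ y\<in>{0..M}. ennreal ((\<alpha>^2 + (\<beta> * y)^2) * (norm (u y))^2) \<partial>lborel)"
    by (simp add: nn_integral_cmult mult.assoc)
  have "ennreal ((norm (LINT y:{0..M}|lborel. u y))^2)
      \<le> (\<integral>\<^sup>+ y\<in>{0..M}. ennreal (1 / (\<alpha> + \<beta> * y)^2) \<partial>lborel)
        * (\<integral>\<^sup>+ y\<in>{0..M}. ennreal ((\<alpha> + \<beta> * y)^2 * (norm (u y))^2) \<partial>lborel)"
    by (rule norm_set_integral_squared_le) (auto dest: pos)
  also have "\<dots> \<le> ennreal (1 / (\<alpha> * \<beta>))
      * (2 * (\<integral>\<^sup>+ y\<in>{0..M}. ennreal ((\<alpha>^2 + (\<beta> * y)^2) * (norm (u y))^2) \<partial>lborel))"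
    by (rule mult_mono[OF nn_integral_Icc_inverse_square_le[OF \<alpha> \<beta>] energy]) simp_all
  also have "\<dots> = ennreal (2 / (\<alpha> * \<beta>)) * (\<integral>\<^sup>+ y\<in>{0..M}. ennreal ((\<alpha>^2 + (\<beta> * y)^2) * (norm (u y))^2) \<partial>lborel)"
    using ennreal_mult[of 2 "1 / (\<alpha> * \<beta>)"] \<alpha> \<beta> by (simp add: mult_ac)
  finally show ?thesis .
qed

lemma norm_set_integral_Icc_squared_le_length:
  fixes u :: "real \<Rightarrow> 'b::{banach, second_countable_topology}"
  assumes [measurable]: "u \<in> borel_measurable borel" and M: "0 \<le> M"
  shows "ennreal ((norm (LINT y:{0..M}|lborel. u y))^2)
     \<le> ennreal M * (\<integral>\<^sup>+ y\<in>{0..M}. ennreal ((norm (u y))^2) \<partial>lborel)"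
  using norm_set_integral_squared_le[of u lborel "\<lambda>_. 1" "{0..M}"] M by simp

lemma norm_diff_squared_le:
  fixes a b c :: "'a::real_normed_vector"
  shows "(norm (a - b))^2 \<le> 2 * (norm (c - a))^2 + 2 * (norm (c - b))^2"
proof -
  have "norm (a - b) \<le> norm (c - a) + norm (c - b)"
    using norm_triangle_ineq4[of "c - b" "c - a"] by simp
  then have "(norm (a - b))^2 \<le> (norm (c - a) + norm (c - b))^2"
    by (intro power_mono) auto
  also have "\<dots> \<le> 2 * (norm (c - a))^2 + 2 * (norm (c - b))^2"
    using zero_le_power2[of "norm (c - a) - norm (c - b)"] by (simp add: power2_sum power2_diff)
  finally show ?thesis .
qed

lemma L2_limit_unique:
  fixes T :: "'i \<Rightarrow> 'a \<Rightarrow> 'b::{banach, second_countable_topology}"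
  assumes [measurable]: "\<And>i. T i \<in> borel_measurable N" "g \<in> borel_measurable N" "h \<in> borel_measurable N"
    and F: "F \<noteq> bot"
    and g: "((\<lambda>i. \<integral>\<^sup>+ z. ennreal ((norm (T i z - g z))^2) \<partial>N) \<longlongrightarrow> 0) F"
    and h: "((\<lambda>i. \<integral>\<^sup>+ z. ennreal ((norm (T i z - h z))^2) \<partial>N) \<longlongrightarrow> 0) F"
  shows "AE z in N. g z = h z"
proof -
  have pointwise: "ennreal ((norm (g z - h z))^2)
      \<le> 2 * ennreal ((norm (T i z - g z))^2) + 2 * ennreal ((norm (T i z - h z))^2)" for i z
    using ennreal_leI[OF norm_diff_squared_le[of "g z" "h z" "T i z"]] by (simp add: ennreal_mult)
  have bound: "(\<integral>\<^sup>+ z. ennreal ((norm (g z - h z))^2) \<partial>N)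
      \<le> 2 * (\<integral>\<^sup>+ z. ennreal ((norm (T i z - g z))^2) \<partial>N) + 2 * (\<integral>\<^sup>+ z. ennreal ((norm (T i z - h z))^2) \<partial>N)"
    for i
  proof -
    have "(\<integral>\<^sup>+ z. ennreal ((norm (g z - h z))^2) \<partial>N)
        \<le> (\<integral>\<^sup>+ z. 2 * ennreal ((norm (T i z - g z))^2) + 2 * ennreal ((norm (T i z - h z))^2) \<partial>N)"
      using pointwise by (intro nn_integral_mono)
    also have "\<dots> = 2 * (\<integral>\<^sup>+ z. ennreal ((norm (T i z - g z))^2) \<partial>N)
        + 2 * (\<integral>\<^sup>+ z. ennreal ((norm (T i z - h z))^2) \<partial>N)"
      by (simp add: nn_integral_add nn_integral_cmult)
    finally show ?thesis .
  qed
  have "((\<lambda>i. 2 * (\<integral>\<^sup>+ z. ennreal ((norm (T i z - g z))^2) \<partial>N) + 2 * (\<integral>\<^sup>+ z. ennreal ((norm (T i z - h z))^2) \<partial>N))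
      \<longlongrightarrow> 2 * 0 + 2 * 0) F"
    by (intro tendsto_add ennreal_tendsto_cmult g h) simp_all
  then have "(\<integral>\<^sup>+ z. ennreal ((norm (g z - h z))^2) \<partial>N) \<le> 2 * 0 + 2 * 0"
    by (rule tendsto_le[OF F _ tendsto_const]) (simp add: bound)
  then have "(\<integral>\<^sup>+ z. ennreal ((norm (g z - h z))^2) \<partial>N) = 0"
    by simp
  then have "AE z in N. ennreal ((norm (g z - h z))^2) = 0"
    by (subst (asm) nn_integral_0_iff_AE) auto
  then show ?thesis by eventually_elim simp
qed

lemma indicator_strip: "indicator (strip M) z = (indicator {0..M} (snd z) :: 'a::zero_neq_one)"
  by (cases z) (auto simp: strip_def indicator_def)

lemma sets_strip [measurable]: "strip M \<in> sets borel"
  unfolding strip_def by (intro borel_closed closed_Times) auto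

lemma sets_strip_pair [measurable]: "strip M \<in> sets (lborel \<Otimes>\<^sub>M lborel)"
  unfolding lborel_prod by simp

lemma borel_measurable_lborel_of_pair:
  "h \<in> borel_measurable (lborel \<Otimes>\<^sub>M lborel) \<Longrightarrow> h \<in> borel_measurable (lborel :: ('a::euclidean_space \<times> 'b::euclidean_space) measure)"
  by (simp add: lborel_prod)

lemma nn_integral_strip_fst:
  assumes [measurable]: "h \<in> borel_measurable (lborel \<Otimes>\<^sub>M lborel)"
  shows "(\<integral>\<^sup>+ z\<in>strip M. h z \<partial>lborel) = (\<integral>\<^sup>+ \<xi>. (\<integral>\<^sup>+ y\<in>{0..M}. h (\<xi>, y) \<partial>lborel) \<partial>lborel)"
proof -
  have "(\<integral>\<^sup>+ z\<in>strip M. h z \<partial>lborel) = (\<integral>\<^sup>+ z. h z * indicator {0..M} (snd z) \<partial>(lborel \<Otimes>\<^sub>M lborel))"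
    by (simp add: lborel_prod indicator_strip)
  then show ?thesis by (simp add: lborel.nn_integral_fst[symmetric])
qed

lemma nn_integral_strip_snd:
  assumes [measurable]: "h \<in> borel_measurable (lborel \<Otimes>\<^sub>M lborel)"
  shows "(\<integral>\<^sup>+ z\<in>strip M. h z \<partial>lborel) = (\<integral>\<^sup>+ y. \<integral>\<^sup>+ \<xi>. h (\<xi>, y) * indicator {0..M} y \<partial>lborel \<partial>lborel)"
proof -
  have "(\<integral>\<^sup>+ z\<in>strip M. h z \<partial>lborel) = (\<integral>\<^sup>+ z. h z * indicator {0..M} (snd z) \<partial>(lborel \<Otimes>\<^sub>M lborel))"
    by (simp add: lborel_prod indicator_strip)
  then show ?thesis by (simp add: lborel_pair.nn_integral_snd[symmetric])
qed

lemma trunc_pft_zero: "trunc_pft f 0 z = 0"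
proof -
  have "AE x in lborel. indicator {-0..0::real} x *\<^sub>R (complex_of_real (f x (snd z)) * cis (- x * fst z)) = 0"
    using AE_lborel_singleton[of "0::real"] by eventually_elim (simp add: indicator_def)
  then show ?thesis unfolding trunc_pft_def set_lebesgue_integral_def by (rule integral_eq_zero_AE)
qed

lemma trunc_pft_eq_fourier: "trunc_pft f R (\<xi>, y) = fourier (\<lambda>x. indicator {-R..R} x * f x y) \<xi>"
  unfolding trunc_pft_def fourier_def set_lebesgue_integral_def
  by (intro Bochner_Integration.integral_cong refl) (simp add: indicator_def)

lemma wsq_eq_wnorm:
  assumes "wsq M w G < \<infinity>"
  shows "wsq M w G = ennreal (2 * pi * (wnorm M w G)^2)"
  using assms unfolding wnorm_def by (simp add: enn2real_nonneg less_top[symmetric])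

lemma wnorm_nonneg: "0 \<le> wnorm M w G"
  unfolding wnorm_def by simp

lemma weighted_pft_energy_le_Ynorm:
  assumes "wfin M (\<lambda>z. \<bar>fst z\<bar> powr (2/3 + a/2)) (pft M f)"
    and "wfin M (\<lambda>z. snd z * \<bar>fst z\<bar> powr (a/2) * \<bar>fst z\<bar>) (pft M f)"
  shows "ennreal (1 / pi) * (wsq M (\<lambda>z. \<bar>fst z\<bar> powr (2/3 + a/2)) (pft M f)
        + wsq M (\<lambda>z. snd z * \<bar>fst z\<bar> powr (a/2) * \<bar>fst z\<bar>) (pft M f))
      \<le> ennreal ((2 * Ynorm M a f G3 G4 G5)\<^sup>2)"
proof -
  define n1 where "n1 = wnorm M (\<lambda>z. \<bar>fst z\<bar> powr (2/3 + a/2)) (pft M f)"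
  define n2 where "n2 = wnorm M (\<lambda>z. snd z * \<bar>fst z\<bar> powr (a/2) * \<bar>fst z\<bar>) (pft M f)"
  have n: "0 \<le> n1" "0 \<le> n2" by (simp_all add: n1_def n2_def wnorm_nonneg)
  have "n1 + n2 \<le> Ynorm M a f G3 G4 G5"
    using wnorm_nonneg[of M "\<lambda>z. 1" G3] wnorm_nonneg[of M "\<lambda>z. 1" G4] wnorm_nonneg[of M "\<lambda>z. 1" G5]
    unfolding n1_def n2_def Ynorm_def by linarith
  then have "(n1 + n2)^2 \<le> (Ynorm M a f G3 G4 G5)^2"
    using n by (intro power_mono) auto
  moreover have "n1^2 + n2^2 \<le> (n1 + n2)^2"
    using n by (simp add: power2_sum)
  ultimately have "2 * n1^2 + 2 * n2^2 \<le> 2 * (Ynorm M a f G3 G4 G5)^2"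
    by simp
  also have "\<dots> \<le> (2 * Ynorm M a f G3 G4 G5)\<^sup>2"
    by (simp add: power_mult_distrib)
  finally have n_bound: "2 * n1^2 + 2 * n2^2 \<le> (2 * Ynorm M a f G3 G4 G5)\<^sup>2" .
  have "ennreal (1 / pi) * (wsq M (\<lambda>z. \<bar>fst z\<bar> powr (2/3 + a/2)) (pft M f)
        + wsq M (\<lambda>z. snd z * \<bar>fst z\<bar> powr (a/2) * \<bar>fst z\<bar>) (pft M f))
      = ennreal (1 / pi) * (ennreal (2 * pi * n1^2) + ennreal (2 * pi * n2^2))"
    using assms unfolding n1_def n2_def wfin_def by (simp add: wsq_eq_wnorm)
  also have "\<dots> = ennreal (2 * n1^2 + 2 * n2^2)"
    by (simp add: ennreal_mult[symmetric] field_simps flip: ennreal_plus del: ennreal_plus)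
  also have "\<dots> \<le> ennreal ((2 * Ynorm M a f G3 G4 G5)\<^sup>2)"
    by (rule ennreal_leI[OF n_bound])
  finally show ?thesis .
qed

locale strip_L2 =
  fixes M :: real and f :: "real \<Rightarrow> real \<Rightarrow> real"
  assumes height_nonneg: "0 \<le> M"
    and measurable_f: "(\<lambda>z. f (fst z) (snd z)) \<in> borel_measurable borel"
    and square_integrable: "(\<integral>\<^sup>+ z\<in>strip M. ennreal ((f (fst z) (snd z))^2) \<partial>lborel) < \<infinity>"
begin

lemma measurable_f_pair [measurable]: "(\<lambda>z. f (fst z) (snd z)) \<in> borel_measurable (lborel \<Otimes>\<^sub>M lborel)"
  using measurable_f by (simp add: lborel_prod)

lemma measurable_slice [measurable]: "(\<lambda>x. f x y) \<in> borel_measurable borel"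
  using measurable_Pair1[OF measurable_f_pair, of y] by simp

lemma measurable_trunc_pft [measurable]: "trunc_pft f R \<in> borel_measurable (lborel \<Otimes>\<^sub>M lborel)"
proof -
  have "(\<lambda>w::(real \<times> real) \<times> real. (snd w, snd (fst w)))
      \<in> measurable ((lborel \<Otimes>\<^sub>M lborel) \<Otimes>\<^sub>M lborel) (lborel \<Otimes>\<^sub>M lborel)"
    by measurable
  from measurable_compose[OF this measurable_f_pair]
  have [measurable]: "(\<lambda>w::(real \<times> real) \<times> real. f (snd w) (snd (fst w)))
      \<in> borel_measurable ((lborel \<Otimes>\<^sub>M lborel) \<Otimes>\<^sub>M lborel)"
    by simp
  have "(\<lambda>(z, x). indicator {-R..R} x *\<^sub>R (complex_of_real (f x (snd z)) * cis (- x * fst z)))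
     \<in> borel_measurable ((lborel \<Otimes>\<^sub>M lborel) \<Otimes>\<^sub>M lborel)"
    by (simp add: case_prod_beta) measurable
  then have "(\<lambda>z. LINT x|lborel. indicator {-R..R} x *\<^sub>R (complex_of_real (f x (snd z)) * cis (- x * fst z)))
     \<in> borel_measurable (lborel \<Otimes>\<^sub>M lborel)"
    by (rule lborel.borel_measurable_lebesgue_integral)
  then show ?thesis unfolding trunc_pft_def[abs_def] set_lebesgue_integral_def by simp
qed

definition tail_energy :: "real \<Rightarrow> ennreal" where
  "tail_energy r = (\<integral>\<^sup>+ z\<in>strip M. ennreal ((f (fst z) (snd z))^2 * of_bool (r < \<bar>fst z\<bar>)) \<partial>lborel)"

lemma tail_energy_le_energy: "tail_energy r \<le> (\<integral>\<^sup>+ z\<in>strip M. ennreal ((f (fst z) (snd z))^2) \<partial>lborel)"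
  unfolding tail_energy_def
  by (intro nn_integral_mono mult_right_mono ennreal_leI) (auto simp: of_bool_def)

lemma tail_energy_antimono: "r \<le> r' \<Longrightarrow> tail_energy r' \<le> tail_energy r"
  unfolding tail_energy_def
  by (intro nn_integral_mono mult_right_mono ennreal_leI) (auto simp: of_bool_def)

lemma tendsto_tail_energy: "(tail_energy \<longlongrightarrow> 0) at_top"
proof -
  define u where "u i z = ennreal ((f (fst z) (snd z))^2 * of_bool (real i < \<bar>fst z\<bar>)) * indicator (strip M) z"
    for i :: nat and z
  have "(\<integral>\<^sup>+ z. (INF i. u i z) \<partial>lborel) = (INF i. integral\<^sup>N lborel (u i))"
  proof (rule nn_integral_monotone_convergence_INF_AE')
    show "AE z in lborel. u (Suc i) z \<le> u i z" for i
      unfolding u_def by (intro AE_I2 mult_right_mono ennreal_leI) (auto simp: of_bool_def)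
    show "u i \<in> borel_measurable lborel" for i
      unfolding u_def by (intro borel_measurable_lborel_of_pair) measurable
    show "(\<integral>\<^sup>+ z. u 0 z \<partial>lborel) < \<infinity>"
      using tail_energy_le_energy[of 0] square_integrable unfolding u_def tail_energy_def by simp
  qed
  moreover have "(INF i. u i z) = 0" for z
  proof -
    have "(INF i. u i z) \<le> u (nat \<lceil>\<bar>fst z\<bar>\<rceil>) z" by (rule INF_lower) simp
    also have "u (nat \<lceil>\<bar>fst z\<bar>\<rceil>) z = 0"
      unfolding u_def by (simp add: of_bool_def not_less) linarith
    finally show ?thesis by simp
  qed
  ultimately have INF_0: "(INF i. tail_energy (real i)) = 0"
    by (simp add: u_def[abs_def] tail_energy_def)
  show ?thesis
  proof (rule decreasing_tendsto)
    fix a :: ennreal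
    assume "0 < a"
    then obtain i where "tail_energy (real i) < a"
      using INF_0 by (metis INF_less_iff UNIV_I)
    then show "eventually (\<lambda>r. tail_energy r < a) at_top"
      unfolding eventually_at_top_linorder by (meson le_less_trans tail_energy_antimono)
  qed simp
qed

lemma trunc_pft_slice_diff_L2_le:
  assumes slice_L2: "(\<integral>\<^sup>+ x. ennreal ((f x y)^2) \<partial>lborel) < \<infinity>"
  shows "(\<integral>\<^sup>+ \<xi>. ennreal ((cmod (trunc_pft f S (\<xi>, y) - trunc_pft f R (\<xi>, y)))^2) \<partial>lborel)
     \<le> 2 * pi * (\<integral>\<^sup>+ x. ennreal ((f x y)^2 * of_bool (min R S < \<bar>x\<bar>)) \<partial>lborel)"
proof -
  have truncated_integrable: "integrable lborel (\<lambda>x. indicator {-r..r} x * f x y)" for r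
  proof -
    have "(\<integral>\<^sup>+ x\<in>{-r..r}. ennreal ((f x y)^2) \<partial>lborel) \<le> (\<integral>\<^sup>+ x. ennreal ((f x y)^2) \<partial>lborel)"
      by (intro nn_integral_mono) (simp add: indicator_def)
    moreover have "emeasure lborel {-r..r} < \<infinity>"
      by (cases "-r \<le> r") auto
    ultimately have "set_integrable lborel {-r..r} (\<lambda>x. f x y)"
      using slice_L2 by (intro L2_set_integrable) auto
    then show ?thesis by (simp add: set_integrable_def)
  qed
  define g where "g x = indicator {-S..S} x * f x y - indicator {-R..R} x * f x y" for x
  have "(\<integral>\<^sup>+ \<xi>. ennreal ((cmod (trunc_pft f S (\<xi>, y) - trunc_pft f R (\<xi>, y)))^2) \<partial>lborel)
      = (\<integral>\<^sup>+ \<xi>. ennreal ((cmod (fourier g \<xi>))^2) \<partial>lborel)"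
    unfolding trunc_pft_eq_fourier g_def fourier_diff[OF truncated_integrable truncated_integrable] ..
  also have "\<dots> \<le> 2 * pi * (\<integral>\<^sup>+ x. ennreal ((g x)^2) \<partial>lborel)"
    unfolding g_def by (intro plancherel_le Bochner_Integration.integrable_diff truncated_integrable)
  also have "\<dots> \<le> 2 * pi * (\<integral>\<^sup>+ x. ennreal ((f x y)^2 * of_bool (min R S < \<bar>x\<bar>)) \<partial>lborel)"
  proof (intro mult_left_mono nn_integral_mono ennreal_leI)
    fix x
    have "(indicator {-S..S} x - indicator {-R..R} x :: real)^2 \<le> of_bool (min R S < \<bar>x\<bar>)"
      by (auto simp: indicator_def abs_le_iff)
    then show "(g x)^2 \<le> (f x y)^2 * of_bool (min R S < \<bar>x\<bar>)"
      unfolding g_def left_diff_distrib[symmetric] power_mult_distrib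
      by (metis mult.commute mult_right_mono zero_le_power2)
  qed simp
  finally show ?thesis .
qed

text \<open>Plancherel on each horizontal slice, integrated over the height.\<close>
lemma trunc_pft_diff_L2_le:
  "(\<integral>\<^sup>+ z\<in>strip M. ennreal ((cmod (trunc_pft f S z - trunc_pft f R z))^2) \<partial>lborel)
     \<le> 2 * pi * tail_energy (min R S)"
proof -
  define Q where "Q y = (\<integral>\<^sup>+ x. ennreal ((f x y)^2) \<partial>lborel)" for y
  have "(\<lambda>w::real \<times> real. (snd w, fst w)) \<in> measurable (lborel \<Otimes>\<^sub>M lborel) (lborel \<Otimes>\<^sub>M lborel)"
    by measurable
  from measurable_compose[OF this measurable_f_pair]
  have [measurable]: "(\<lambda>w. f (snd w) (fst w)) \<in> borel_measurable (lborel \<Otimes>\<^sub>M lborel)"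
    by simp
  have [measurable]: "Q \<in> borel_measurable lborel"
    unfolding Q_def[abs_def] by (rule lborel.borel_measurable_nn_integral) (simp add: case_prod_beta)
  have "(\<integral>\<^sup>+ y. Q y * indicator {0..M} y \<partial>lborel) \<noteq> \<infinity>"
    using square_integrable
    by (subst (asm) nn_integral_strip_snd) (auto simp: Q_def nn_integral_multc)
  then have "AE y in lborel. Q y * indicator {0..M} y \<noteq> \<infinity>"
    by (intro nn_integral_PInf_AE) measurable
  then have "AE y in lborel.
      (\<integral>\<^sup>+ \<xi>. ennreal ((cmod (trunc_pft f S (\<xi>, y) - trunc_pft f R (\<xi>, y)))^2) * indicator {0..M} y \<partial>lborel)
      \<le> 2 * pi * ((\<integral>\<^sup>+ x. ennreal ((f x y)^2 * of_bool (min R S < \<bar>x\<bar>)) \<partial>lborel) * indicator {0..M} y)"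
  proof eventually_elim
    case (elim y)
    show ?case
    proof (cases "y \<in> {0..M}")
      case True
      with elim have "Q y < \<infinity>" by (simp add: top.not_eq_extremum)
      with True show ?thesis
        using trunc_pft_slice_diff_L2_le[of y S R] by (simp add: Q_def)
    qed simp
  qed
  then have "(\<integral>\<^sup>+ z\<in>strip M. ennreal ((cmod (trunc_pft f S z - trunc_pft f R z))^2) \<partial>lborel)
      \<le> (\<integral>\<^sup>+ y. 2 * pi * ((\<integral>\<^sup>+ x. ennreal ((f x y)^2 * of_bool (min R S < \<bar>x\<bar>)) \<partial>lborel) * indicator {0..M} y) \<partial>lborel)"
    by (subst nn_integral_strip_snd) (auto intro: nn_integral_mono_AE)
  also have "\<dots> = 2 * pi * tail_energy (min R S)"
    unfolding tail_energy_def
    by (subst nn_integral_strip_snd) (auto simp: nn_integral_multc nn_integral_cmult)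
  finally show ?thesis .
qed

text \<open>The choice in the definition of \<open>pft\<close> is not vacuous: the truncated transforms have an
  \<open>L\<^sup>2\<close>-limit.\<close>
lemma
  shows measurable_pft [measurable]: "pft M f \<in> borel_measurable lborel"
    and square_integrable_pft: "(\<integral>\<^sup>+ z\<in>strip M. ennreal ((cmod (pft M f z))^2) \<partial>lborel) < \<infinity>"
    and tendsto_trunc_pft:
      "((\<lambda>R. \<integral>\<^sup>+ z\<in>strip M. ennreal ((cmod (trunc_pft f R z - pft M f z))^2) \<partial>lborel) \<longlongrightarrow> 0) at_top"
proof -
  have "trunc_pft f R \<in> borel_measurable lborel" for R
    by (intro borel_measurable_lborel_of_pair measurable_trunc_pft)
  moreover have e_lim: "((\<lambda>R. 2 * pi * tail_energy R) \<longlongrightarrow> 0) at_top"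
    using ennreal_tendsto_cmult[OF _ tendsto_tail_energy, of "2 * pi"] by simp
  ultimately obtain F where F_meas: "F \<in> borel_measurable lborel"
    and F_lim: "\<And>R. (\<integral>\<^sup>+ z\<in>strip M. ennreal ((cmod (trunc_pft f R z - F z))^2) \<partial>lborel)
      \<le> 2 * pi * tail_energy R"
    using L2_limit_of_Cauchy_modulus[of "trunc_pft f" lborel "strip M" "\<lambda>R. 2 * pi * tail_energy R"]
      trunc_pft_diff_L2_le by auto
  have "\<exists>F. F \<in> borel_measurable lborel \<and>
      (\<integral>\<^sup>+ z\<in>strip M. ennreal ((cmod (F z))^2) \<partial>lborel) < \<infinity> \<and>
      ((\<lambda>R. \<integral>\<^sup>+ z\<in>strip M. ennreal ((cmod (trunc_pft f R z - F z))^2) \<partial>lborel) \<longlongrightarrow> 0) at_top"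
  proof (intro exI[of _ F] conjI F_meas)
    have "(\<integral>\<^sup>+ z\<in>strip M. ennreal ((cmod (F z))^2) \<partial>lborel) \<le> 2 * pi * tail_energy 0"
      using F_lim[of 0] by (simp add: trunc_pft_zero)
    also have "\<dots> < \<infinity>"
      using tail_energy_le_energy[of 0] square_integrable by (simp add: ennreal_mult_less_top le_less_trans)
    finally show "(\<integral>\<^sup>+ z\<in>strip M. ennreal ((cmod (F z))^2) \<partial>lborel) < \<infinity>" .
    show "((\<lambda>R. \<integral>\<^sup>+ z\<in>strip M. ennreal ((cmod (trunc_pft f R z - F z))^2) \<partial>lborel) \<longlongrightarrow> 0) at_top"
      by (rule tendsto_sandwich[OF _ _ tendsto_const e_lim]) (simp_all add: F_lim)
  qed
  then have "pft M f \<in> borel_measurable lborel \<and>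
      (\<integral>\<^sup>+ z\<in>strip M. ennreal ((cmod (pft M f z))^2) \<partial>lborel) < \<infinity> \<and>
      ((\<lambda>R. \<integral>\<^sup>+ z\<in>strip M. ennreal ((cmod (trunc_pft f R z - pft M f z))^2) \<partial>lborel) \<longlongrightarrow> 0) at_top"
    unfolding pft_def by (rule someI_ex)
  then show "pft M f \<in> borel_measurable lborel"
    and "(\<integral>\<^sup>+ z\<in>strip M. ennreal ((cmod (pft M f z))^2) \<partial>lborel) < \<infinity>"
    and "((\<lambda>R. \<integral>\<^sup>+ z\<in>strip M. ennreal ((cmod (trunc_pft f R z - pft M f z))^2) \<partial>lborel) \<longlongrightarrow> 0) at_top"
    by auto
qed

lemma measurable_pft_pair [measurable]: "pft M f \<in> borel_measurable (lborel \<Otimes>\<^sub>M lborel)"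
  using measurable_pft by (simp add: lborel_prod)

lemma set_integrable_rectangle:
  "set_integrable (lborel \<Otimes>\<^sub>M lborel) ({-R..R} \<times> {0..M}) (\<lambda>z. f (fst z) (snd z))"
proof (rule L2_set_integrable)
  have "emeasure lborel {-R..R} < \<infinity>" "emeasure lborel {0..M} < \<infinity>"
    by (cases "-R \<le> R"; simp) (use height_nonneg in simp)
  then show "emeasure (lborel \<Otimes>\<^sub>M lborel) ({-R..R} \<times> {0..M}) < \<infinity>"
    by (simp add: lborel.emeasure_pair_measure_Times ennreal_mult_less_top)
  have "(\<integral>\<^sup>+ z\<in>{-R..R} \<times> {0..M}. ennreal ((norm (f (fst z) (snd z)))^2) \<partial>(lborel \<Otimes>\<^sub>M lborel))
      \<le> (\<integral>\<^sup>+ z\<in>strip M. ennreal ((f (fst z) (snd z))^2) \<partial>lborel)"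
    by (simp add: lborel_prod) (intro nn_integral_mono mult_left_mono, auto simp: indicator_def strip_def)
  then show "(\<integral>\<^sup>+ z\<in>{-R..R} \<times> {0..M}. ennreal ((norm (f (fst z) (snd z)))^2) \<partial>(lborel \<Otimes>\<^sub>M lborel)) < \<infinity>"
    using square_integrable by (rule le_less_trans)
qed simp_all

lemma trunc_ft_IM:
  shows "trunc_ft (\<lambda>x. complex_of_real (IM M f x)) R \<xi> = (LINT y:{0..M}|lborel. trunc_pft f R (\<xi>, y))"
    and "set_integrable lborel {0..M} (\<lambda>y. trunc_pft f R (\<xi>, y))"
proof -
  define Q where "Q x y = indicator ({-R..R} \<times> {0..M}) (x, y) *\<^sub>R (complex_of_real (f x y) * cis (- x * \<xi>))"
    for x y
  from set_integrable_rectangle have Q_int: "integrable (lborel \<Otimes>\<^sub>M lborel) (\<lambda>(x, y). Q x y)"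
    unfolding set_integrable_def
    by (rule Bochner_Integration.integrable_bound)
       (auto simp: Q_def case_prod_beta norm_mult indicator_def)
  have IM_eq: "indicator {-R..R} x *\<^sub>R (complex_of_real (IM M f x) * cis (- x * \<xi>)) = (LINT y|lborel. Q x y)" for x
  proof -
    have "complex_of_real (IM M f x) = (LINT y|lborel. indicator {0..M} y *\<^sub>R complex_of_real (f x y))"
      unfolding IM_def set_lebesgue_integral_def integral_complex_of_real[symmetric]
      by (simp add: scaleR_conv_of_real)
    then show ?thesis
      by (simp add: Q_def indicator_times scaleR_conv_of_real mult_ac flip: integral_mult_right_zero)
  qed
  have pft_eq: "indicator {0..M} y *\<^sub>R trunc_pft f R (\<xi>, y) = (LINT x|lborel. Q x y)" for y
    unfolding trunc_pft_def set_lebesgue_integral_def Q_def indicator_times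
    by (simp add: mult.commute flip: integral_scaleR_right)
  have "trunc_ft (\<lambda>x. complex_of_real (IM M f x)) R \<xi> = (LINT x|lborel. LINT y|lborel. Q x y)"
    unfolding trunc_ft_def set_lebesgue_integral_def IM_eq ..
  also have "\<dots> = (LINT y|lborel. LINT x|lborel. Q x y)"
    by (rule lborel_pair.Fubini_integral[OF Q_int, symmetric])
  finally show "trunc_ft (\<lambda>x. complex_of_real (IM M f x)) R \<xi> = (LINT y:{0..M}|lborel. trunc_pft f R (\<xi>, y))"
    unfolding set_lebesgue_integral_def pft_eq .
  show "set_integrable lborel {0..M} (\<lambda>y. trunc_pft f R (\<xi>, y))"
    unfolding set_integrable_def pft_eq by (rule lborel_pair.integrable_snd[OF Q_int])
qed

definition IM_pft :: "real \<Rightarrow> complex" where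
  "IM_pft \<xi> = (LINT y:{0..M}|lborel. pft M f (\<xi>, y))"

lemma measurable_IM_pft [measurable]: "IM_pft \<in> borel_measurable borel"
proof -
  have "(\<lambda>(\<xi>, y). indicator {0..M} y *\<^sub>R pft M f (\<xi>, y)) \<in> borel_measurable (lborel \<Otimes>\<^sub>M lborel)"
    by (simp add: case_prod_beta) measurable
  from lborel.borel_measurable_lebesgue_integral[OF this]
  show ?thesis unfolding IM_pft_def[abs_def] set_lebesgue_integral_def by simp
qed

lemma measurable_trunc_ft_IM [measurable]:
  "trunc_ft (\<lambda>x. complex_of_real (IM M f x)) R \<in> borel_measurable borel"
proof -
  have "(\<lambda>(\<xi>, y). indicator {0..M} y *\<^sub>R trunc_pft f R (\<xi>, y)) \<in> borel_measurable (lborel \<Otimes>\<^sub>M lborel)"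
    by (simp add: case_prod_beta) measurable
  from lborel.borel_measurable_lebesgue_integral[OF this]
  show ?thesis unfolding trunc_ft_IM(1)[abs_def] set_lebesgue_integral_def by simp
qed

lemma nn_integral_norm_IM_squared_le:
  assumes [measurable]: "G \<in> borel_measurable (lborel \<Otimes>\<^sub>M lborel)"
  shows "(\<integral>\<^sup>+ \<xi>. ennreal ((cmod (LINT y:{0..M}|lborel. G (\<xi>, y)))^2) \<partial>lborel)
    \<le> ennreal M * (\<integral>\<^sup>+ z\<in>strip M. ennreal ((cmod (G z))^2) \<partial>lborel)"
proof -
  have "(\<integral>\<^sup>+ \<xi>. ennreal ((cmod (LINT y:{0..M}|lborel. G (\<xi>, y)))^2) \<partial>lborel)
      \<le> (\<integral>\<^sup>+ \<xi>. ennreal M * (\<integral>\<^sup>+ y\<in>{0..M}. ennreal ((cmod (G (\<xi>, y)))^2) \<partial>lborel) \<partial>lborel)"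
    using height_nonneg measurable_Pair2[OF assms]
    by (intro nn_integral_mono norm_set_integral_Icc_squared_le_length) auto
  also have "\<dots> = ennreal M * (\<integral>\<^sup>+ z\<in>strip M. ennreal ((cmod (G z))^2) \<partial>lborel)"
    by (subst nn_integral_strip_fst) (auto intro: nn_integral_cmult)
  finally show ?thesis .
qed

lemma square_integrable_IM_pft: "(\<integral>\<^sup>+ \<xi>. ennreal ((cmod (IM_pft \<xi>))^2) \<partial>lborel) < \<infinity>"
  using nn_integral_norm_IM_squared_le[OF measurable_pft_pair] square_integrable_pft
  unfolding IM_pft_def by (simp add: ennreal_mult_less_top le_less_trans)

text \<open>Integration over the height commutes with the \<open>L\<^sup>2\<close>-limit because
  \<open>|\<integral>\<^sub>0\<^sup>M G|\<^sup>2 \<le> M \<integral>\<^sub>0\<^sup>M |G|\<^sup>2\<close>.\<close>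
lemma tendsto_trunc_ft_IM:
  "((\<lambda>R. \<integral>\<^sup>+ \<xi>. ennreal ((cmod (trunc_ft (\<lambda>x. complex_of_real (IM M f x)) R \<xi> - IM_pft \<xi>))^2) \<partial>lborel)
    \<longlongrightarrow> 0) at_top"
proof (rule tendsto_sandwich[OF _ _ tendsto_const])
  have "AE \<xi> in lborel. (\<integral>\<^sup>+ y\<in>{0..M}. ennreal ((cmod (pft M f (\<xi>, y)))^2) \<partial>lborel) \<noteq> \<infinity>"
    using square_integrable_pft
    by (intro nn_integral_PInf_AE) (auto simp: nn_integral_strip_fst)
  then have "AE \<xi> in lborel. set_integrable lborel {0..M} (\<lambda>y. pft M f (\<xi>, y))"
  proof eventually_elim
    case (elim \<xi>)
    then show ?case
      using height_nonneg measurable_Pair2[OF measurable_pft_pair, of \<xi>]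
      by (intro L2_set_integrable) (auto simp: top.not_eq_extremum)
  qed
  then have diff_eq: "AE \<xi> in lborel. trunc_ft (\<lambda>x. complex_of_real (IM M f x)) R \<xi> - IM_pft \<xi>
      = (LINT y:{0..M}|lborel. trunc_pft f R (\<xi>, y) - pft M f (\<xi>, y))" for R
    by eventually_elim (simp add: trunc_ft_IM IM_pft_def set_integral_diff)
  have "(\<integral>\<^sup>+ \<xi>. ennreal ((cmod (trunc_ft (\<lambda>x. complex_of_real (IM M f x)) R \<xi> - IM_pft \<xi>))^2) \<partial>lborel)
      = (\<integral>\<^sup>+ \<xi>. ennreal ((cmod (LINT y:{0..M}|lborel. trunc_pft f R (\<xi>, y) - pft M f (\<xi>, y)))^2) \<partial>lborel)" for R
    by (intro nn_integral_cong_AE eventually_mono[OF diff_eq[of R]]) simp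
  also have "\<dots> R \<le> ennreal M * (\<integral>\<^sup>+ z\<in>strip M. ennreal ((cmod (trunc_pft f R z - pft M f z))^2) \<partial>lborel)" for R
    by (rule nn_integral_norm_IM_squared_le[of "\<lambda>z. trunc_pft f R z - pft M f z", simplified]) measurable
  finally show "\<forall>\<^sub>F R in at_top.
      (\<integral>\<^sup>+ \<xi>. ennreal ((cmod (trunc_ft (\<lambda>x. complex_of_real (IM M f x)) R \<xi> - IM_pft \<xi>))^2) \<partial>lborel)
      \<le> ennreal M * (\<integral>\<^sup>+ z\<in>strip M. ennreal ((cmod (trunc_pft f R z - pft M f z))^2) \<partial>lborel)"
    by simp
  show "((\<lambda>R. ennreal M * (\<integral>\<^sup>+ z\<in>strip M. ennreal ((cmod (trunc_pft f R z - pft M f z))^2) \<partial>lborel))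
      \<longlongrightarrow> 0) at_top"
    using ennreal_tendsto_cmult[OF _ tendsto_trunc_pft, of M] by simp
qed simp

lemma ft1_IM_AE_eq: "AE \<xi> in lborel. ft1 (\<lambda>x. complex_of_real (IM M f x)) \<xi> = IM_pft \<xi>"
proof -
  let ?g = "\<lambda>x. complex_of_real (IM M f x)"
  have "\<exists>h. h \<in> borel_measurable lborel \<and> (\<integral>\<^sup>+ \<xi>. ennreal ((cmod (h \<xi>))\<^sup>2) \<partial>lborel) < \<infinity> \<and>
      ((\<lambda>R. \<integral>\<^sup>+ \<xi>. ennreal ((cmod (trunc_ft ?g R \<xi> - h \<xi>))\<^sup>2) \<partial>lborel) \<longlongrightarrow> 0) at_top"
    using square_integrable_IM_pft tendsto_trunc_ft_IM by (intro exI[of _ IM_pft]) simp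
  then have ft1: "ft1 ?g \<in> borel_measurable lborel \<and>
      ((\<lambda>R. \<integral>\<^sup>+ \<xi>. ennreal ((cmod (trunc_ft ?g R \<xi> - ft1 ?g \<xi>))\<^sup>2) \<partial>lborel) \<longlongrightarrow> 0) at_top"
    unfolding ft1_def by (rule someI2_ex) blast
  show ?thesis
    using ft1 tendsto_trunc_ft_IM by (intro L2_limit_unique[where T="trunc_ft ?g"]) auto
qed

lemma weighted_norm_IM_pft_le:
  "ennreal (\<bar>\<xi>\<bar> powr (5/3 + a) * (cmod (IM_pft \<xi>))^2 / (2 * pi))
    \<le> ennreal (1 / pi) * (\<integral>\<^sup>+ y\<in>{0..M}. ennreal (((\<bar>\<xi>\<bar> powr (2/3 + a/2))^2
          + (y * \<bar>\<xi>\<bar> powr (a/2) * \<bar>\<xi>\<bar>)^2) * (cmod (pft M f (\<xi>, y)))^2) \<partial>lborel)"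
proof (cases "\<xi> = 0")
  case False
  define \<alpha> where "\<alpha> = \<bar>\<xi>\<bar> powr (2/3 + a/2)"
  define \<beta> where "\<beta> = \<bar>\<xi>\<bar> powr (a/2) * \<bar>\<xi>\<bar>"
  have \<alpha>: "0 < \<alpha>" and \<beta>: "0 < \<beta>" using False by (simp_all add: \<alpha>_def \<beta>_def)
  have "\<alpha> * \<beta> = \<bar>\<xi>\<bar> powr (2/3 + a/2) * \<bar>\<xi>\<bar> powr (a/2) * \<bar>\<xi>\<bar> powr 1"
    by (simp add: \<alpha>_def \<beta>_def mult.assoc)
  also have "\<dots> = \<bar>\<xi>\<bar> powr (5/3 + a)"
    unfolding powr_add[symmetric] by (rule arg_cong[where f="\<lambda>p. \<bar>\<xi>\<bar> powr p"]) simp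
  finally have \<alpha>\<beta>: "\<alpha> * \<beta> = \<bar>\<xi>\<bar> powr (5/3 + a)" .
  have "ennreal (\<bar>\<xi>\<bar> powr (5/3 + a) * (cmod (IM_pft \<xi>))^2 / (2 * pi))
      = ennreal (\<alpha> * \<beta> / (2 * pi)) * ennreal ((cmod (IM_pft \<xi>))^2)"
    using \<alpha> \<beta> by (simp add: \<alpha>\<beta> ennreal_mult[symmetric] del: ennreal_mult)
  also have "\<dots> \<le> ennreal (\<alpha> * \<beta> / (2 * pi)) * (ennreal (2 / (\<alpha> * \<beta>))
      * (\<integral>\<^sup>+ y\<in>{0..M}. ennreal ((\<alpha>^2 + (\<beta> * y)^2) * (cmod (pft M f (\<xi>, y)))^2) \<partial>lborel))"
    unfolding IM_pft_def using measurable_Pair2[OF measurable_pft_pair]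
    by (intro mult_left_mono norm_set_integral_Icc_squared_le \<alpha> \<beta>) auto
  also have "\<dots> = ennreal (1 / pi)
      * (\<integral>\<^sup>+ y\<in>{0..M}. ennreal ((\<alpha>^2 + (\<beta> * y)^2) * (cmod (pft M f (\<xi>, y)))^2) \<partial>lborel)"
    using \<alpha> \<beta> by (simp add: mult.assoc[symmetric] ennreal_mult[symmetric] del: ennreal_mult)
  finally show ?thesis
    by (simp add: \<alpha>_def \<beta>_def mult_ac)
qed simp

lemma weighted_L2_ft1_IM_le:
  "(\<integral>\<^sup>+ \<xi>. ennreal (\<bar>\<xi>\<bar> powr (5/3 + a) * (cmod (ft1 (\<lambda>x. complex_of_real (IM M f x)) \<xi>))^2 / (2 * pi)) \<partial>lborel)
    \<le> ennreal (1 / pi) * (wsq M (\<lambda>z. \<bar>fst z\<bar> powr (2/3 + a/2)) (pft M f)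
        + wsq M (\<lambda>z. snd z * \<bar>fst z\<bar> powr (a/2) * \<bar>fst z\<bar>) (pft M f))"
proof -
  have "(\<integral>\<^sup>+ \<xi>. ennreal (\<bar>\<xi>\<bar> powr (5/3 + a) * (cmod (ft1 (\<lambda>x. complex_of_real (IM M f x)) \<xi>))^2 / (2 * pi)) \<partial>lborel)
      = (\<integral>\<^sup>+ \<xi>. ennreal (\<bar>\<xi>\<bar> powr (5/3 + a) * (cmod (IM_pft \<xi>))^2 / (2 * pi)) \<partial>lborel)"
    using ft1_IM_AE_eq by (intro nn_integral_cong_AE) auto
  also have "\<dots> \<le> (\<integral>\<^sup>+ \<xi>. ennreal (1 / pi) * (\<integral>\<^sup>+ y\<in>{0..M}. ennreal (((\<bar>\<xi>\<bar> powr (2/3 + a/2))^2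
          + (y * \<bar>\<xi>\<bar> powr (a/2) * \<bar>\<xi>\<bar>)^2) * (cmod (pft M f (\<xi>, y)))^2) \<partial>lborel) \<partial>lborel)"
    by (intro nn_integral_mono weighted_norm_IM_pft_le)
  also have "\<dots> = ennreal (1 / pi) * (\<integral>\<^sup>+ z\<in>strip M. ennreal ((\<bar>fst z\<bar> powr (2/3 + a/2))^2 * (cmod (pft M f z))^2)
      + ennreal ((snd z * \<bar>fst z\<bar> powr (a/2) * \<bar>fst z\<bar>)^2 * (cmod (pft M f z))^2) \<partial>lborel)"
    by (subst nn_integral_strip_fst) (auto simp: nn_integral_cmult distrib_right)
  also have "\<dots> = ennreal (1 / pi) * (wsq M (\<lambda>z. \<bar>fst z\<bar> powr (2/3 + a/2)) (pft M f)
        + wsq M (\<lambda>z. snd z * \<bar>fst z\<bar> powr (a/2) * \<bar>fst z\<bar>) (pft M f))"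
  proof -
    have m1: "(\<lambda>z. ennreal ((\<bar>fst z\<bar> powr (2/3 + a/2))^2 * (cmod (pft M f z))^2) * indicator (strip M) z)
        \<in> borel_measurable lborel"
      and m2: "(\<lambda>z. ennreal ((snd z * \<bar>fst z\<bar> powr (a/2) * \<bar>fst z\<bar>)^2 * (cmod (pft M f z))^2) * indicator (strip M) z)
        \<in> borel_measurable lborel"
      by (intro borel_measurable_lborel_of_pair; measurable)+
    show ?thesis
      unfolding wsq_def nn_integral_add[OF m1 m2, symmetric] by (simp add: distrib_right)
  qed
  finally show ?thesis .
qed

end

text \<open>The bound holds for every real \<open>a\<close>.\<close>
theorem proposition2p4:
  fixes M :: real
  assumes "M > 0"
  shows "\<exists>C>0. \<forall>a\<ge>0. \<forall>f G3 G4 G5. inX M a f G3 G4 G5 \<longrightarrow>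
    (\<integral>\<^sup>+ \<xi>. ennreal (\<bar>\<xi>\<bar> powr (5/3 + a) * (cmod (ft1 (\<lambda>x. complex_of_real (IM M f x)) \<xi>))\<^sup>2 / (2 * pi)) \<partial>lborel)
      \<le> ennreal ((C * Ynorm M a f G3 G4 G5)\<^sup>2)"
proof (intro exI[of _ 2] conjI allI impI)
  fix a :: real and f G3 G4 G5
  assume X: "inX M a f G3 G4 G5"
  interpret strip_L2 M f
    using X \<open>M > 0\<close> by unfold_locales (auto simp: inX_def)
  have "(\<integral>\<^sup>+ \<xi>. ennreal (\<bar>\<xi>\<bar> powr (5/3 + a) * (cmod (ft1 (\<lambda>x. complex_of_real (IM M f x)) \<xi>))\<^sup>2 / (2 * pi)) \<partial>lborel)
      \<le> ennreal (1 / pi) * (wsq M (\<lambda>z. \<bar>fst z\<bar> powr (2/3 + a/2)) (pft M f)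
        + wsq M (\<lambda>z. snd z * \<bar>fst z\<bar> powr (a/2) * \<bar>fst z\<bar>) (pft M f))"
    by (rule weighted_L2_ft1_IM_le)
  also have "\<dots> \<le> ennreal ((2 * Ynorm M a f G3 G4 G5)\<^sup>2)"
    using X unfolding inX_def by (intro weighted_pft_energy_le_Ynorm) auto
  finally show "(\<integral>\<^sup>+ \<xi>. ennreal (\<bar>\<xi>\<bar> powr (5/3 + a) * (cmod (ft1 (\<lambda>x. complex_of_real (IM M f x)) \<xi>))\<^sup>2 / (2 * pi)) \<partial>lborel)
      \<le> ennreal ((2 * Ynorm M a f G3 G4 G5)\<^sup>2)" .
qed simp

end
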